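(* Let $\mu\in\mathcal{C}([0,\infty);\mathcal{P}_2(\mathbb{R}^2))$ be a global measure-valued solution of $\partial_t\mu+\partial_x(F[\mu]\mu)=0$, let $x_c(t):=\int x\,\mu_t(dx,d\omega)$ and $\tilde\mu_t:=\delta_{x_c(t)}\otimes\nu$ for $t\ge0$. Then for all $t\ge0$, $$\Big|\frac{d}{dt}x_c(t)-F[\tilde\mu_t](x_c(t),\omega_c)\Big|\le((\kappa+1)I+\kappa M)\,W_1(\mu_t,\tilde\mu_t)+I\gamma.$$
   Context: $\nu$ is a Borel probability measure on $\mathbb{R}$ with finite second moment and bounded support $\Omega$; $\gamma:=\sup_{\omega,\omega'\in\Omega}|\omega-\omega'|$, $\omega_c:=\int\omega\,\nu(d\omega)$. $\mathcal{P}_2^\nu(\mathbb{R}^2)$: Borel probability measures on $\mathbb{R}^2$ with finite second moment and $\omega$-marginal $\nu$. $W_1$: 1-Wasserstein distance. $F$ assigns to each $\mu\in\mathcal{P}_2^\nu(\mathbb{R}^2)$ a function $F[\mu]:\mathbb{R}^2\to\mathbb{R}$ satisfying, with constants $A,B,I,M,\kappa>0$: (A1) $\sup_{(x,\omega)\in\mathbb{R}\times\Omega}|\partial_x^\alpha F[\mu](x,\omega)-\partial_x^\alpha F[\mu'](x,\omega)|\le\kappa MW_1(\mu,\mu')$ for $\alpha=0,1$; (A2) $F[\mu]\in C^2(\mathbb{R}^2)$, $\|\partial_xF[\mu]\|_\infty\le\kappa I$, $\|\partial_x^2F[\mu]\|_\infty\le\kappa I$, $\|\partial_\omega F[\mu]\|_\infty\le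 I$; (A3) $F[(\tau_{2\pi})_\sharp\mu](x+2\pi,\omega)=F[\mu](x,\omega)$ with $\tau_{2\pi}(x,\omega)=(x+2\pi,\omega)$; (A4) $\inf_xF[\delta_x\otimes\nu](x,\omega_c)\ge A$; (A5) $\int_0^{2\pi}\frac{\partial_xF[\delta_x\otimes\nu](x,\omega_c)}{F[\delta_x\otimes\nu](x,\omega_c)}dx\le-\kappa B$ (derivatives in the spatial arguments with $\mu$ fixed). A global measure-valued solution with initial datum $\mu_0\in\mathcal{P}_2^\nu(\mathbb{R}^2)$ is $\mu\in\mathcal{C}([0,\infty);\mathcal{P}_2(\mathbb{R}^2))$ (with $\omega$-marginal $\nu$ for all $t$) such that $t\mapsto\int\varphi d\mu_t$ is continuous for $\varphi\in\mathcal{C}_0(\mathbb{R}^2)$ and $\int\varphi(t)d\mu_t=\int\varphi(0)d\mu_0+\int_0^t\int(\partial_s\varphi+F[\mu_s]\partial_x\varphi)d\mu_sds$ for all $\varphi\in\mathcal{C}^1_0([0,\infty)\times\mathbb{R}^2)$. *)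

theory Defs
  imports "HOL-Probability.Probability"
begin

definition P2 :: "('a::euclidean_space) measure set" where
  "P2 = {M. prob_space M \<and> sets M = sets borel \<and> integrable M (\<lambda>p. (norm p)^2)}"

definition P2nu :: "real measure \<Rightarrow> (real \<times> real) measure set" where
  "P2nu \<nu> = {M \<in> P2. distr M borel snd = \<nu>}"

definition couplings :: "('a::euclidean_space) measure \<Rightarrow> 'a measure \<Rightarrow> ('a \<times> 'a) measure set" where
  "couplings M N = {\<pi>. prob_space \<pi> \<and> sets \<pi> = sets borel \<and>
     distr \<pi> borel fst = M \<and> distr \<pi> borel snd = N}"

definition wasserstein :: "real \<Rightarrow> ('a::euclidean_space) measure \<Rightarrow> 'a measure \<Rightarrow> real" where
  "wasserstein p M N =
     (Inf {(\<integral>z. (dist (fst z) (snd z)) powr p \<partial>\<pi>) | \<pi>.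
             \<pi> \<in> couplings M N \<and> integrable \<pi> (\<lambda>z. (dist (fst z) (snd z)) powr p)}) powr (1 / p)"

abbreviation W1 :: "('a::euclidean_space) measure \<Rightarrow> 'a measure \<Rightarrow> real" where
  "W1 \<equiv> wasserstein 1"

definition msupport :: "real measure \<Rightarrow> real set" where
  "msupport \<nu> = {w. \<forall>e>0. emeasure \<nu> (ball w e) > 0}"

definition pdx :: "(real \<Rightarrow> real \<Rightarrow> real) \<Rightarrow> real \<Rightarrow> real \<Rightarrow> real" where
  "pdx f x w = deriv (\<lambda>y. f y w) x"

definition pdw :: "(real \<Rightarrow> real \<Rightarrow> real) \<Rightarrow> real \<Rightarrow> real \<Rightarrow> real" where
  "pdw f x w = deriv (\<lambda>v. f x v) w"

definition C2 :: "('a::euclidean_space \<Rightarrow> real) \<Rightarrow> bool" where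
  "C2 f \<longleftrightarrow> (\<exists>Df D2f. (\<forall>p. (f has_derivative blinfun_apply (Df p)) (at p)) \<and>
     (\<forall>p. (Df has_derivative blinfun_apply (D2f p)) (at p)) \<and> continuous_on UNIV D2f)"

definition C1 :: "('a::euclidean_space \<Rightarrow> real) \<Rightarrow> bool" where
  "C1 f \<longleftrightarrow> (\<exists>Df. (\<forall>p. (f has_derivative blinfun_apply (Df p)) (at p)) \<and> continuous_on UNIV Df)"

definition tsupport :: "('a::real_normed_vector \<Rightarrow> real) \<Rightarrow> 'a set" where
  "tsupport f = closure {p. f p \<noteq> 0}"

text \<open>Test functions in C^1_0([0,\<infinity>) x R^2) are taken as restrictions of compactly supported
  C^1 functions on R x R^2 (variables ordered (t,(x,omega))).\<close>
definition mvsol :: "((real \<times> real) measure \<Rightarrow> real \<Rightarrow> real \<Rightarrow> real) \<Rightarrow> real measure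
    \<Rightarrow> (real \<Rightarrow> (real \<times> real) measure) \<Rightarrow> bool" where
  "mvsol F \<nu> \<mu> \<longleftrightarrow>
     (\<forall>t\<ge>0. \<mu> t \<in> P2nu \<nu>) \<and>
     (\<forall>t\<ge>0. ((\<lambda>s. wasserstein 2 (\<mu> s) (\<mu> t)) \<longlongrightarrow> 0) (at t within {0..})) \<and>
     (\<forall>\<phi>::real \<times> real \<Rightarrow> real. continuous_on UNIV \<phi> \<and> compact (tsupport \<phi>) \<longrightarrow>
        continuous_on {0..} (\<lambda>t. \<integral>p. \<phi> p \<partial>(\<mu> t))) \<and>
     (\<forall>\<phi>::real \<times> (real \<times> real) \<Rightarrow> real. C1 \<phi> \<and> compact (tsupport \<phi>) \<longrightarrow>
        (\<forall>t\<ge>0. (\<integral>p. \<phi> (t, p) \<partial>(\<mu> t)) =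
            (\<integral>p. \<phi> (0, p) \<partial>(\<mu> 0)) +
            integral {0..t} (\<lambda>s. \<integral>p. (deriv (\<lambda>r. \<phi> (r, p)) s
                + F (\<mu> s) (fst p) (snd p) * deriv (\<lambda>y. \<phi> (s, (y, snd p))) (fst p)) \<partial>(\<mu> s))))"

end

theory Submission
  imports Defs
begin

text \<open>Testing the weak formulation against the first coordinate, smoothly truncated in \<open>x\<close>, \<open>\<omega>\<close>
  and time, and letting the truncation radius tend to infinity gives
  \<open>x\<^sub>c(t) = x\<^sub>c(0) + \<integral>\<^sub>0\<^sup>t v(s) ds\<close> with \<open>v(s) = \<integral> F[\<mu>\<^sub>s] d\<mu>\<^sub>s\<close>. The velocity \<open>v\<close> is continuous
  because \<open>F\<close> depends Lipschitz-continuously on the measure in \<open>W\<^sub>1\<close>, which is dominated by \<open>W\<^sub>2\<close>,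
  in which \<open>\<mu>\<close> is continuous; hence \<open>x\<^sub>c' = v\<close>.

  With \<open>\<rho>\<^sub>t = \<delta>\<^bsub>x\<^sub>c(t)\<^esub> \<otimes> \<nu>\<close>, the difference \<open>v(t) - F[\<rho>\<^sub>t](x\<^sub>c(t), \<omega>\<^sub>c)\<close> splits into three parts:
  replacing \<open>\<mu>\<^sub>t\<close> by \<open>\<rho>\<^sub>t\<close> inside \<open>F\<close> costs \<open>\<kappa> M W\<^sub>1(\<mu>\<^sub>t, \<rho>\<^sub>t)\<close>; integrating the
  \<open>(\<kappa> + 1) I\<close>-Lipschitz function \<open>F[\<rho>\<^sub>t]\<close> against \<open>\<rho>\<^sub>t\<close> instead of \<open>\<mu>\<^sub>t\<close> costs
  \<open>(\<kappa> + 1) I W\<^sub>1(\<mu>\<^sub>t, \<rho>\<^sub>t)\<close>; and under \<open>\<rho>\<^sub>t\<close>, replacing \<open>\<omega>\<close> by its mean \<open>\<omega>\<^sub>c\<close> costs \<open>I \<gamma>\<close>, since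
  \<open>\<omega>\<^sub>c\<close> lies within \<open>\<gamma>\<close> of every point of the support of \<open>\<nu>\<close>.\<close>

section \<open>Supports, couplings and the Wasserstein distance\<close>

lemma msupport_complement:
  fixes \<nu> :: "real measure"
  assumes "sets \<nu> = sets borel"
  shows "- msupport \<nu> = \<Union>{ball w e | w e. 0 < e \<and> emeasure \<nu> (ball w e) = 0}"
proof (intro equalityI subsetI)
  fix y assume "y \<in> - msupport \<nu>"
  then obtain e where "0 < e" "emeasure \<nu> (ball y e) = 0"
    by (auto simp: msupport_def not_less)
  then show "y \<in> \<Union>{ball w e | w e. 0 < e \<and> emeasure \<nu> (ball w e) = 0}"
    by (auto intro!: exI[of _ "ball y e"])
next
  fix y assume "y \<in> \<Union>{ball w e | w e. 0 < e \<and> emeasure \<nu> (ball w e) = 0}"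
  then obtain w e where we: "y \<in> ball w e" "emeasure \<nu> (ball w e) = 0" by blast
  have "ball y (e - dist w y) \<subseteq> ball w e"
  proof
    fix x assume "x \<in> ball y (e - dist w y)"
    with dist_triangle[of w x y] show "x \<in> ball w e" by simp
  qed
  then have "emeasure \<nu> (ball y (e - dist w y)) \<le> emeasure \<nu> (ball w e)"
    by (rule emeasure_mono) (simp add: assms)
  then have "emeasure \<nu> (ball y (e - dist w y)) = 0" using we(2) by simp
  with we(1) show "y \<in> - msupport \<nu>" by (auto simp: msupport_def intro!: exI[of _ "e - dist w y"])
qed

lemma closed_msupport:
  assumes "sets \<nu> = sets borel"
  shows "closed (msupport \<nu>)"
proof -
  have "open (- msupport \<nu>)"
    unfolding msupport_complement[OF assms] by (intro open_Union) auto
  then show ?thesis by (simp add: closed_def)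
qed

lemma AE_msupport:
  assumes sets: "sets \<nu> = sets borel"
  shows "AE w in \<nu>. w \<in> msupport \<nu>"
proof -
  let ?\<F> = "{ball w e | w e. 0 < e \<and> emeasure \<nu> (ball w e) = 0}"
  obtain \<F>' where \<F>': "\<F>' \<subseteq> ?\<F>" "countable \<F>'" "\<Union>\<F>' = \<Union>?\<F>"
    using Lindelof[of ?\<F>] by auto
  have null: "\<Union>\<F>' \<in> null_sets \<nu>"
    using \<F>'(1) sets
    by (intro null_sets_UN'[OF \<F>'(2), of id, simplified]) (auto simp: null_sets_def)
  have "{w \<in> space \<nu>. w \<notin> msupport \<nu>} \<subseteq> - msupport \<nu>" by blast
  then have "{w \<in> space \<nu>. w \<notin> msupport \<nu>} \<subseteq> \<Union>\<F>'"
    unfolding msupport_complement[OF sets] \<F>'(3) .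
  with null show ?thesis by (rule AE_I')
qed

lemma P2D:
  fixes M :: "'a::euclidean_space measure"
  assumes "M \<in> P2"
  shows "prob_space M" "sets M = sets borel" "integrable M (\<lambda>p. (norm p)^2)" "integrable M norm"
proof -
  show "prob_space M" and sets: "sets M = sets borel" and sq: "integrable M (\<lambda>p. (norm p)^2)"
    using assms by (auto simp: P2_def)
  then interpret prob_space M by simp
  have le: "x \<le> 1 + x^2" for x :: real
  proof -
    have "0 \<le> (x - 1)^2 + x^2" by simp
    moreover have "(x - 1)^2 = x^2 - 2 * x + 1" by algebra
    ultimately show ?thesis by linarith
  qed
  show "integrable M norm"
    by (rule Bochner_Integration.integrable_bound[of _ "\<lambda>p. 1 + (norm p)^2"])
       (use sq sets in \<open>auto simp: measurable_cong_sets[OF sets refl] le\<close>)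
qed

lemma couplingsD:
  assumes "\<pi> \<in> couplings M N"
  shows "prob_space \<pi>" "sets \<pi> = sets borel" "distr \<pi> borel fst = M" "distr \<pi> borel snd = N"
  using assms by (auto simp: couplings_def)

lemma couplings_fst:
  fixes M N :: "'a::euclidean_space measure" and f :: "'a \<Rightarrow> real"
  assumes "\<pi> \<in> couplings M N" "f \<in> borel_measurable borel"
  shows "integrable \<pi> (\<lambda>z. f (fst z)) \<longleftrightarrow> integrable M f"
    "(\<integral>z. f (fst z) \<partial>\<pi>) = (\<integral>x. f x \<partial>M)"
proof -
  have sets: "sets \<pi> = sets borel" and marginal: "distr \<pi> borel fst = M"
    using couplingsD[OF assms(1)] by auto
  have "fst \<in> measurable \<pi> borel"
    by (simp add: measurable_cong_sets[OF sets refl] borel_prod[symmetric])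
  from integrable_distr_eq[OF this assms(2)] integral_distr[OF this assms(2)]
  show "integrable \<pi> (\<lambda>z. f (fst z)) \<longleftrightarrow> integrable M f" "(\<integral>z. f (fst z) \<partial>\<pi>) = (\<integral>x. f x \<partial>M)"
    unfolding marginal by simp_all
qed

lemma couplings_snd:
  fixes M N :: "'a::euclidean_space measure" and f :: "'a \<Rightarrow> real"
  assumes "\<pi> \<in> couplings M N" "f \<in> borel_measurable borel"
  shows "integrable \<pi> (\<lambda>z. f (snd z)) \<longleftrightarrow> integrable N f"
    "(\<integral>z. f (snd z) \<partial>\<pi>) = (\<integral>x. f x \<partial>N)"
proof -
  have sets: "sets \<pi> = sets borel" and marginal: "distr \<pi> borel snd = N"
    using couplingsD[OF assms(1)] by auto
  have "snd \<in> measurable \<pi> borel"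
    by (simp add: measurable_cong_sets[OF sets refl] borel_prod[symmetric])
  from integrable_distr_eq[OF this assms(2)] integral_distr[OF this assms(2)]
  show "integrable \<pi> (\<lambda>z. f (snd z)) \<longleftrightarrow> integrable N f" "(\<integral>z. f (snd z) \<partial>\<pi>) = (\<integral>x. f x \<partial>N)"
    unfolding marginal by simp_all
qed

lemma pair_measure_in_couplings:
  fixes M N :: "'a::euclidean_space measure"
  assumes "prob_space M" "prob_space N" "sets M = sets borel" "sets N = sets borel"
  shows "M \<Otimes>\<^sub>M N \<in> couplings M N"
proof -
  interpret M: prob_space M by fact
  interpret N: prob_space N by fact
  have "sets (M \<Otimes>\<^sub>M N) = sets (borel \<Otimes>\<^sub>M borel)"
    by (rule sets_pair_measure_cong[OF assms(3,4)])
  also have "\<dots> = sets (borel :: ('a \<times> 'a) measure)" by (subst borel_prod) rule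
  finally have sets: "sets (M \<Otimes>\<^sub>M N) = sets borel" .
  have "distr (M \<Otimes>\<^sub>M N) borel fst = distr (M \<Otimes>\<^sub>M N) M fst"
    by (rule distr_cong) (use assms in auto)
  also have "\<dots> = M" by (rule N.distr_pair_fst)
  finally have fst: "distr (M \<Otimes>\<^sub>M N) borel fst = M" .
  have "distr (M \<Otimes>\<^sub>M N) borel snd = distr (M \<Otimes>\<^sub>M N) N snd"
    by (rule distr_cong) (use assms in auto)
  also have "\<dots> = N"
  proof (rule measure_eqI)
    fix A assume A: "A \<in> sets (distr (M \<Otimes>\<^sub>M N) N snd)"
    then have "emeasure (distr (M \<Otimes>\<^sub>M N) N snd) A = emeasure (M \<Otimes>\<^sub>M N) (space M \<times> A)"
      by (auto simp: emeasure_distr space_pair_measure dest: sets.sets_into_space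
          intro!: arg_cong2[where f=emeasure])
    with A show "emeasure (distr (M \<Otimes>\<^sub>M N) N snd) A = emeasure N A"
      using N.emeasure_pair_measure_Times[of "space M" M A] by (auto simp: M.emeasure_space_1)
  qed simp
  finally have snd: "distr (M \<Otimes>\<^sub>M N) borel snd = N" .
  show ?thesis
    unfolding couplings_def using sets fst snd prob_space_pair[OF assms(1,2)] by auto
qed

lemma integrable_lipschitz_P2:
  fixes M :: "'a::euclidean_space measure" and g :: "'a \<Rightarrow> real"
  assumes M: "M \<in> P2" and g: "L-lipschitz_on UNIV g"
  shows "integrable M g"
proof (rule Bochner_Integration.integrable_bound[of _ "\<lambda>p. \<bar>g 0\<bar> + L * norm p"])
  interpret prob_space M using P2D(1)[OF M] .
  show "integrable M (\<lambda>p. \<bar>g 0\<bar> + L * norm p)" using P2D(4)[OF M] by simp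
  show "g \<in> borel_measurable M"
    using borel_measurable_continuous_onI[OF lipschitz_on_continuous_on[OF g]]
    by (simp add: measurable_cong_sets[OF P2D(2)[OF M] refl])
  have "norm (g p) \<le> norm (\<bar>g 0\<bar> + L * norm p)" for p
    using lipschitz_onD[OF g, of p 0] lipschitz_on_nonneg[OF g] by (simp add: dist_real_def)
  then show "AE p in M. norm (g p) \<le> norm (\<bar>g 0\<bar> + L * norm p)" by simp
qed

definition coupling_costs :: "real \<Rightarrow> ('a::euclidean_space) measure \<Rightarrow> 'a measure \<Rightarrow> real set" where
  "coupling_costs p M N = {(\<integral>z. (dist (fst z) (snd z)) powr p \<partial>\<pi>) | \<pi>.
     \<pi> \<in> couplings M N \<and> integrable \<pi> (\<lambda>z. (dist (fst z) (snd z)) powr p)}"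

lemma wasserstein_eq_coupling_costs: "wasserstein p M N = Inf (coupling_costs p M N) powr (1 / p)"
  by (simp add: wasserstein_def coupling_costs_def)

lemma coupling_costs_nonneg: "c \<in> coupling_costs p M N \<Longrightarrow> 0 \<le> c"
  by (auto simp: coupling_costs_def)

lemma coupling_costs_nonempty:
  fixes M N :: "'a::euclidean_space measure"
  assumes M: "M \<in> P2" and N: "N \<in> P2" and p: "p = 1 \<or> p = 2"
  shows "coupling_costs p M N \<noteq> {}"
proof -
  let ?\<pi> = "M \<Otimes>\<^sub>M N" and ?d = "\<lambda>z. dist (fst z) (snd z)"
  have \<pi>: "?\<pi> \<in> couplings M N" by (rule pair_measure_in_couplings) (use P2D[OF M] P2D[OF N] in auto)
  have sets: "sets ?\<pi> = sets borel" using couplingsD[OF \<pi>] by simp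
  have meas: "norm \<in> borel_measurable borel" "(\<lambda>p. (norm p)^2) \<in> borel_measurable borel"
    "?d \<in> borel_measurable ?\<pi>" "(\<lambda>z. (?d z)^2) \<in> borel_measurable ?\<pi>"
    unfolding measurable_cong_sets[OF sets refl]
    by (intro borel_measurable_continuous_onI continuous_intros)+
  have "integrable ?\<pi> (\<lambda>z. norm (fst z) + norm (snd z))"
    using couplings_fst(1)[OF \<pi> meas(1)] couplings_snd(1)[OF \<pi> meas(1)] P2D[OF M] P2D[OF N] by simp
  then have "integrable ?\<pi> ?d"
    by (rule Bochner_Integration.integrable_bound[OF _ meas(3)])
       (intro AE_I2, simp add: dist_norm norm_triangle_ineq4)
  have "integrable ?\<pi> (\<lambda>z. 2 * (norm (fst z))^2 + 2 * (norm (snd z))^2)"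
    using couplings_fst(1)[OF \<pi> meas(2)] couplings_snd(1)[OF \<pi> meas(2)] P2D[OF M] P2D[OF N] by simp
  then have "integrable ?\<pi> (\<lambda>z. (?d z)^2)"
  proof (rule Bochner_Integration.integrable_bound[OF _ meas(4)])
    have "(?d z)^2 \<le> 2 * (norm (fst z))^2 + 2 * (norm (snd z))^2" for z
    proof -
      have "(?d z)^2 \<le> (norm (fst z) + norm (snd z))^2"
        by (rule power_mono) (simp_all add: dist_norm norm_triangle_ineq4)
      also have "\<dots> \<le> 2 * (norm (fst z))^2 + 2 * (norm (snd z))^2"
        using zero_le_power2[of "norm (fst z) - norm (snd z)"]
        unfolding power2_sum power2_diff by linarith
      finally show ?thesis .
    qed
    then show "AE z in ?\<pi>. norm ((?d z)^2) \<le> norm (2 * (norm (fst z))^2 + 2 * (norm (snd z))^2)"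
      by (intro AE_I2) simp
  qed
  with \<open>integrable ?\<pi> ?d\<close> p have "integrable ?\<pi> (\<lambda>z. (?d z) powr p)"
    by (elim disjE) (simp_all add: powr_one)
  with \<pi> show ?thesis unfolding coupling_costs_def by blast
qed

lemma W1_eq_Inf_coupling_costs:
  fixes M N :: "'a::euclidean_space measure"
  assumes "M \<in> P2" "N \<in> P2"
  shows "W1 M N = Inf (coupling_costs 1 M N)"
proof -
  have "0 \<le> Inf (coupling_costs 1 M N)"
    by (intro cInf_greatest coupling_costs_nonempty assms) (auto dest: coupling_costs_nonneg)
  then show ?thesis by (simp add: wasserstein_eq_coupling_costs)
qed

lemma wasserstein_nonneg: "0 \<le> wasserstein p M N"
  unfolding wasserstein_def by (rule powr_ge_zero)

text \<open>The easy half of Kantorovich--Rubinstein duality: integrate the Lipschitz bound against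
  an arbitrary coupling.\<close>
lemma abs_integral_diff_le_W1:
  fixes M N :: "'a::euclidean_space measure" and g :: "'a \<Rightarrow> real"
  assumes M: "M \<in> P2" and N: "N \<in> P2" and g: "L-lipschitz_on UNIV g"
  shows "\<bar>(\<integral>x. g x \<partial>M) - (\<integral>x. g x \<partial>N)\<bar> \<le> L * W1 M N"
proof -
  have meas: "g \<in> borel_measurable borel"
    by (rule borel_measurable_continuous_onI[OF lipschitz_on_continuous_on[OF g]])
  have L: "0 \<le> L" using lipschitz_on_nonneg[OF g] .
  have bound: "\<bar>(\<integral>x. g x \<partial>M) - (\<integral>x. g x \<partial>N)\<bar> \<le> L * c" if "c \<in> coupling_costs 1 M N" for c
  proof -
    from that obtain \<pi> where \<pi>: "\<pi> \<in> couplings M N"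
      "integrable \<pi> (\<lambda>z. dist (fst z) (snd z) powr 1)"
      and c: "c = (\<integral>z. dist (fst z) (snd z) powr 1 \<partial>\<pi>)"
      unfolding coupling_costs_def by blast
    have int: "integrable \<pi> (\<lambda>z. g (fst z))" "integrable \<pi> (\<lambda>z. g (snd z))"
      using couplings_fst(1)[OF \<pi>(1) meas] couplings_snd(1)[OF \<pi>(1) meas]
        integrable_lipschitz_P2[OF M g] integrable_lipschitz_P2[OF N g] by auto
    have "(\<integral>x. g x \<partial>M) - (\<integral>x. g x \<partial>N) = (\<integral>z. g (fst z) - g (snd z) \<partial>\<pi>)"
      using couplings_fst(2)[OF \<pi>(1) meas] couplings_snd(2)[OF \<pi>(1) meas] int by simp
    also have "\<bar>\<dots>\<bar> \<le> (\<integral>z. L * dist (fst z) (snd z) \<partial>\<pi>)"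
      using lipschitz_onD[OF g] \<pi>(2)
      by (intro integral_abs_bound_integral) (auto simp: int dist_real_def real_abs_dist)
    also have "\<dots> = L * c" using c by (simp add: real_abs_dist)
    finally show ?thesis .
  qed
  have nonempty: "coupling_costs 1 M N \<noteq> {}" by (rule coupling_costs_nonempty[OF M N]) simp
  show ?thesis
  proof (cases "L = 0")
    case True
    with nonempty bound show ?thesis by fastforce
  next
    case False
    with L have "\<bar>(\<integral>x. g x \<partial>M) - (\<integral>x. g x \<partial>N)\<bar> / L \<le> Inf (coupling_costs 1 M N)"
      using bound by (intro cInf_greatest[OF nonempty]) (auto simp: divide_le_eq mult.commute)
    with False L show ?thesis
      by (simp add: W1_eq_Inf_coupling_costs[OF M N] divide_le_eq mult.commute)
  qed
qed

lemma integral_dist_le_amgm: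
  fixes \<pi> :: "('a::euclidean_space \<times> 'a) measure"
  assumes \<pi>: "\<pi> \<in> couplings M N" and sq: "integrable \<pi> (\<lambda>z. (dist (fst z) (snd z))^2)"
    and e: "0 < e"
  shows "integrable \<pi> (\<lambda>z. dist (fst z) (snd z))"
    and "(\<integral>z. dist (fst z) (snd z) \<partial>\<pi>) \<le> ((\<integral>z. (dist (fst z) (snd z))^2 \<partial>\<pi>) + e^2) / (2 * e)"
proof -
  interpret prob_space \<pi> using couplingsD(1)[OF \<pi>] .
  let ?d = "\<lambda>z. dist (fst z) (snd z)" and ?b = "\<lambda>z. ((dist (fst z) (snd z))^2 + e^2) / (2 * e)"
  have amgm: "?d z \<le> ?b z" for z
  proof -
    have "2 * ?d z * e \<le> (?d z)^2 + e^2"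
      using zero_le_power2[of "?d z - e"] unfolding power2_diff by linarith
    then show ?thesis using e by (simp add: field_simps)
  qed
  have int_b: "integrable \<pi> ?b" using sq by simp
  have "?d \<in> borel_measurable \<pi>"
    unfolding measurable_cong_sets[OF couplingsD(2)[OF \<pi>] refl]
    by (intro borel_measurable_continuous_onI continuous_intros)
  moreover have "norm (?d z) \<le> norm (?b z)" for z
    using amgm[of z] zero_le_dist[of "fst z" "snd z"] by (smt (verit) real_norm_def)
  ultimately show int_d: "integrable \<pi> ?d"
    by (intro Bochner_Integration.integrable_bound[OF int_b] AE_I2)
  have "(\<integral>z. ?d z \<partial>\<pi>) \<le> (\<integral>z. ?b z \<partial>\<pi>)" by (rule integral_mono[OF int_d int_b amgm])
  also have "\<dots> = ((\<integral>z. (?d z)^2 \<partial>\<pi>) + e^2) / (2 * e)" using sq by (simp add: prob_space)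
  finally show "(\<integral>z. ?d z \<partial>\<pi>) \<le> ((\<integral>z. (?d z)^2 \<partial>\<pi>) + e^2) / (2 * e)" .
qed

text \<open>A coupling of quadratic cost \<open>c < e\<^sup>2\<close> has linear cost at most \<open>(c + e\<^sup>2) / (2 e) < e\<close>.\<close>
lemma W1_le_W2:
  fixes M N :: "'a::euclidean_space measure"
  assumes M: "M \<in> P2" and N: "N \<in> P2"
  shows "W1 M N \<le> wasserstein 2 M N"
proof (rule dense_ge)
  fix e assume e_gt: "wasserstein 2 M N < e"
  have nonempty: "coupling_costs 2 M N \<noteq> {}" by (rule coupling_costs_nonempty[OF M N]) simp
  have Inf_nonneg: "0 \<le> Inf (coupling_costs 2 M N)"
    by (intro cInf_greatest[OF nonempty]) (auto dest: coupling_costs_nonneg)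
  have e: "0 < e" using e_gt wasserstein_nonneg[of 2 M N] by linarith
  have "sqrt (Inf (coupling_costs 2 M N)) < e"
    using e_gt Inf_nonneg by (simp add: wasserstein_eq_coupling_costs powr_half_sqrt)
  then have "Inf (coupling_costs 2 M N) < e^2"
    using Inf_nonneg e
    by (metis real_sqrt_less_iff real_sqrt_pow2 abs_of_pos real_sqrt_abs power2_eq_square)
  then obtain c where c: "c \<in> coupling_costs 2 M N" "c < e^2" using cInf_lessD[OF nonempty] by blast
  then obtain \<pi> where \<pi>: "\<pi> \<in> couplings M N" "integrable \<pi> (\<lambda>z. (dist (fst z) (snd z))^2)"
    and c_eq: "c = (\<integral>z. (dist (fst z) (snd z))^2 \<partial>\<pi>)"
    by (auto simp: coupling_costs_def)
  note amgm = integral_dist_le_amgm[OF \<pi> e]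
  have "(\<integral>z. dist (fst z) (snd z) \<partial>\<pi>) \<le> (c + e^2) / (2 * e)" using amgm(2) c_eq by simp
  also have "\<dots> \<le> e" using c e by (simp add: field_simps power2_eq_square)
  finally have "(\<integral>z. dist (fst z) (snd z) \<partial>\<pi>) \<le> e" .
  moreover have "(\<integral>z. dist (fst z) (snd z) \<partial>\<pi>) \<in> coupling_costs 1 M N"
    unfolding coupling_costs_def using \<pi>(1) amgm(1) by auto
  ultimately have "Inf (coupling_costs 1 M N) \<le> e"
    by (intro cInf_lower2) (auto simp: bdd_below_def intro: coupling_costs_nonneg)
  then show "W1 M N \<le> e" by (simp add: W1_eq_Inf_coupling_costs[OF M N])
qed

lemma abs_integral_diff_le:
  fixes f g :: "'a \<Rightarrow> real"
  assumes "prob_space M" "integrable M f" "integrable M g"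
    and "AE x in M. \<bar>f x - g x\<bar> \<le> c"
  shows "\<bar>(\<integral>x. f x \<partial>M) - (\<integral>x. g x \<partial>M)\<bar> \<le> c"
proof -
  interpret prob_space M by fact
  have "\<bar>(\<integral>x. f x \<partial>M) - (\<integral>x. g x \<partial>M)\<bar> = \<bar>\<integral>x. f x - g x \<partial>M\<bar>" using assms by simp
  also have "\<dots> \<le> (\<integral>x. \<bar>f x - g x\<bar> \<partial>M)" using integral_norm_bound[of M "\<lambda>x. f x - g x"] by simp
  also have "\<dots> \<le> (\<integral>x. c \<partial>M)" using assms by (intro integral_mono_AE) auto
  finally show ?thesis by (simp add: prob_space)
qed

lemma tendsto_integral_perturbed:
  fixes \<mu> :: "real \<Rightarrow> 'a measure" and k :: "real \<Rightarrow> 'a \<Rightarrow> real"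
  assumes W: "(W \<longlongrightarrow> 0) (at t within S)"
    and bound: "\<And>s. s \<in> S \<Longrightarrow> prob_space (\<mu> s) \<and> integrable (\<mu> s) (k s) \<and> integrable (\<mu> s) (k t)
      \<and> (AE p in \<mu> s. \<bar>k s p - k t p\<bar> \<le> c * W s)"
    and lim: "((\<lambda>s. \<integral>p. k t p \<partial>\<mu> s) \<longlongrightarrow> (\<integral>p. k t p \<partial>\<mu> t)) (at t within S)"
  shows "((\<lambda>s. \<integral>p. k s p \<partial>\<mu> s) \<longlongrightarrow> (\<integral>p. k t p \<partial>\<mu> t)) (at t within S)"
proof -
  have "eventually (\<lambda>s. norm ((\<integral>p. k s p \<partial>\<mu> s) - (\<integral>p. k t p \<partial>\<mu> s)) \<le> c * W s) (at t within S)"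
    unfolding eventually_at_filter using bound
    by (intro always_eventually allI impI) (auto intro!: abs_integral_diff_le)
  moreover have "((\<lambda>s. c * W s) \<longlongrightarrow> 0) (at t within S)"
    using tendsto_mult_right_zero[OF W] by simp
  ultimately have "((\<lambda>s. (\<integral>p. k s p \<partial>\<mu> s) - (\<integral>p. k t p \<partial>\<mu> s)) \<longlongrightarrow> 0) (at t within S)"
    by (rule Lim_null_comparison)
  from tendsto_add[OF this lim] show ?thesis by simp
qed

lemma P2nu_D:
  assumes "m \<in> P2nu \<nu>"
  shows "m \<in> P2" "distr m borel snd = \<nu>" "sets \<nu> = sets borel"
  using assms by (auto simp: P2nu_def P2_def)

lemma AE_P2nu_msupport:
  assumes m: "m \<in> P2nu \<nu>"
  shows "AE p in m. snd p \<in> msupport \<nu>"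
proof -
  have snd: "snd \<in> measurable m borel"
    by (simp add: measurable_cong_sets[OF P2D(2)[OF P2nu_D(1)[OF m]] refl] borel_prod[symmetric])
  have "AE w in distr m borel snd. w \<in> msupport \<nu>"
    unfolding P2nu_D(2)[OF m] by (rule AE_msupport[OF P2nu_D(3)[OF m]])
  moreover have "{w \<in> space borel. w \<in> msupport \<nu>} \<in> sets borel"
    using closed_msupport[OF P2nu_D(3)[OF m]] by simp
  ultimately show ?thesis by (simp add: AE_distr_iff[OF snd])
qed

lemma dirac_pair:
  fixes \<nu> :: "real measure"
  assumes \<nu>: "\<nu> \<in> P2"
  shows "return borel c \<Otimes>\<^sub>M \<nu> \<in> couplings (return borel c) \<nu>"
    "return borel c \<Otimes>\<^sub>M \<nu> \<in> P2nu \<nu>"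
    "AE p in return borel c \<Otimes>\<^sub>M \<nu>. fst p = c"
proof -
  let ?R = "return borel c" and ?m = "return borel c \<Otimes>\<^sub>M \<nu>"
  interpret R: prob_space ?R by (rule prob_space_return) simp
  show cpl: "?m \<in> couplings ?R \<nu>"
    by (rule pair_measure_in_couplings) (use P2D[OF \<nu>] R.prob_space_axioms in auto)
  have square: "(\<lambda>x::real. x^2) \<in> borel_measurable borel" by measurable
  have "integrable ?R (\<lambda>x::real. x^2)"
    by (rule integrable_cong_AE_imp[where g="\<lambda>x. c^2"])
       (simp_all add: AE_return measurable_cong_sets[OF sets_return refl] square)
  then have "integrable ?m (\<lambda>p. (fst p)^2 + (snd p)^2)"
    using couplings_fst(1)[OF cpl square] couplings_snd(1)[OF cpl square] P2D(3)[OF \<nu>] by simp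
  moreover have "(norm p)^2 = (fst p)^2 + (snd p)^2" for p :: "real \<times> real"
    by (cases p) (simp add: norm_Pair)
  ultimately show "?m \<in> P2nu \<nu>"
    using couplingsD[OF cpl] by (simp add: P2nu_def P2_def)
  have fst: "fst \<in> measurable ?m borel"
    by (simp add: measurable_cong_sets[OF couplingsD(2)[OF cpl] refl] borel_prod[symmetric])
  have "AE x in distr ?m borel fst. x = c" unfolding couplingsD(3)[OF cpl] by (simp add: AE_return)
  then show "AE p in ?m. fst p = c" by (simp add: AE_distr_iff[OF fst])
qed

lemma integral_dirac_pair:
  fixes \<nu> :: "real measure" and f :: "real \<Rightarrow> real \<Rightarrow> real"
  assumes \<nu>: "\<nu> \<in> P2" and f: "(\<lambda>p. f (fst p) (snd p)) \<in> borel_measurable borel"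
  shows "(\<integral>p. f (fst p) (snd p) \<partial>(return borel c \<Otimes>\<^sub>M \<nu>)) = (\<integral>w. f c w \<partial>\<nu>)"
proof -
  note cpl = dirac_pair(1)[OF \<nu>]
  have sets: "sets (return borel c \<Otimes>\<^sub>M \<nu>) = sets borel" using couplingsD(2)[OF cpl] .
  have "(\<lambda>w. (c, w)) \<in> borel_measurable borel"
    by (intro borel_measurable_continuous_onI continuous_intros)
  from measurable_compose[OF this f]
  have fc: "(\<lambda>w. f c w) \<in> borel_measurable borel" by simp
  have snd: "snd \<in> measurable (return borel c \<Otimes>\<^sub>M \<nu>) borel"
    by (simp add: measurable_cong_sets[OF sets refl] borel_prod[symmetric])
  have "(\<integral>p. f (fst p) (snd p) \<partial>(return borel c \<Otimes>\<^sub>M \<nu>)) = (\<integral>p. f c (snd p) \<partial>(return borel c \<Otimes>\<^sub>M \<nu>))"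
  proof (rule integral_cong_AE)
    show "(\<lambda>p. f (fst p) (snd p)) \<in> borel_measurable (return borel c \<Otimes>\<^sub>M \<nu>)"
      using f by (simp add: measurable_cong_sets[OF sets refl])
    show "(\<lambda>p. f c (snd p)) \<in> borel_measurable (return borel c \<Otimes>\<^sub>M \<nu>)"
      using measurable_compose[OF snd fc] by simp
    show "AE p in return borel c \<Otimes>\<^sub>M \<nu>. f (fst p) (snd p) = f c (snd p)"
      using dirac_pair(3)[OF \<nu>, of c] by eventually_elim simp
  qed
  also have "\<dots> = (\<integral>w. f c w \<partial>\<nu>)" by (rule couplings_snd(2)[OF cpl fc])
  finally show ?thesis .
qed

lemma abs_mean_diff_le_diameter:
  fixes \<nu> :: "real measure"
  assumes \<nu>: "\<nu> \<in> P2" and bdd: "bounded (msupport \<nu>)" and w: "w \<in> msupport \<nu>"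
  shows "\<bar>w - (\<integral>v. v \<partial>\<nu>)\<bar> \<le> Sup {\<bar>v - v'\<bar> | v v'. v \<in> msupport \<nu> \<and> v' \<in> msupport \<nu>}"
    (is "_ \<le> Sup ?D")
proof -
  interpret prob_space \<nu> using P2D(1)[OF \<nu>] .
  obtain B where B: "\<And>v. v \<in> msupport \<nu> \<Longrightarrow> \<bar>v\<bar> \<le> B"
    using bdd unfolding bounded_iff by auto
  have "bdd_above ?D"
    by (rule bdd_aboveI[of _ "2 * B"]) (auto dest!: B)
  have "AE v in \<nu>. \<bar>w - v\<bar> \<le> Sup ?D"
    using AE_msupport[OF P2D(2)[OF \<nu>]]
    by eventually_elim (use \<open>bdd_above ?D\<close> w in \<open>auto intro!: cSup_upper\<close>)
  moreover have "integrable \<nu> (\<lambda>v. v)"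
    by (rule integrable_lipschitz_P2[OF \<nu>, of 1]) (simp add: lipschitz_on_id)
  ultimately have "\<bar>(\<integral>v. w \<partial>\<nu>) - (\<integral>v. v \<partial>\<nu>)\<bar> \<le> Sup ?D"
    by (intro abs_integral_diff_le) (simp_all add: prob_space_axioms)
  then show ?thesis by (simp add: prob_space)
qed

section \<open>Smooth test functions\<close>

lemma C2_has_partial_derivatives:
  fixes f :: "real \<Rightarrow> real \<Rightarrow> real"
  assumes "C2 (\<lambda>p. f (fst p) (snd p))"
  shows "((\<lambda>y. f y w) has_real_derivative pdx f x w) (at x)"
    and "((\<lambda>v. f x v) has_real_derivative pdw f x w) (at w)"
proof -
  have f: "(\<lambda>p. f (fst p) (snd p)) differentiable (at (x, w))"
    using assms unfolding C2_def by (blast intro: differentiableI)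
  have "(\<lambda>y. (y, w)) differentiable (at x)" "(\<lambda>v. (x, v)) differentiable (at w)"
    by (auto intro!: differentiableI derivative_intros)
  from this[THEN differentiable_chain_at, OF f[unfolded o_def]]
  have "(\<lambda>y. f y w) differentiable (at x)" "(\<lambda>v. f x v) differentiable (at w)"
    by (simp_all add: o_def)
  then show "((\<lambda>y. f y w) has_real_derivative pdx f x w) (at x)"
    and "((\<lambda>v. f x v) has_real_derivative pdw f x w) (at w)"
    unfolding pdx_def pdw_def by (simp_all add: DERIV_deriv_iff_real_differentiable)
qed

lemma C2_lipschitz:
  fixes f :: "real \<Rightarrow> real \<Rightarrow> real"
  assumes "C2 (\<lambda>p. f (fst p) (snd p))"
    and "\<And>x w. \<bar>pdx f x w\<bar> \<le> Bx" and "\<And>x w. \<bar>pdw f x w\<bar> \<le> Bw"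
  shows "\<bar>f x w - f x' w'\<bar> \<le> Bx * \<bar>x - x'\<bar> + Bw * \<bar>w - w'\<bar>"
proof -
  have "\<bar>f x w - f x' w\<bar> \<le> Bx * \<bar>x - x'\<bar>"
    using field_differentiable_bound[of UNIV "\<lambda>y. f y w" "\<lambda>y. pdx f y w" Bx x x']
      C2_has_partial_derivatives(1)[OF assms(1)] assms(2) by simp
  moreover have "\<bar>f x' w - f x' w'\<bar> \<le> Bw * \<bar>w - w'\<bar>"
    using field_differentiable_bound[of UNIV "\<lambda>v. f x' v" "\<lambda>v. pdw f x' v" Bw w w']
      C2_has_partial_derivatives(2)[OF assms(1)] assms(3) by simp
  ultimately show ?thesis by linarith
qed

lemma C1_product_of_coordinates:
  fixes a b c a' b' c' :: "real \<Rightarrow> real"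
  assumes a: "\<And>t. (a has_real_derivative a' t) (at t)" "continuous_on UNIV a'"
    and b: "\<And>t. (b has_real_derivative b' t) (at t)" "continuous_on UNIV b'"
    and c: "\<And>t. (c has_real_derivative c' t) (at t)" "continuous_on UNIV c'"
  shows "C1 (\<lambda>z::real \<times> (real \<times> real). a (fst z) * b (fst (snd z)) * c (snd (snd z)))"
proof -
  have cont: "continuous_on UNIV a" "continuous_on UNIV b" "continuous_on UNIV c"
    using a(1) b(1) c(1) by (auto intro!: continuous_at_imp_continuous_on DERIV_isCont)
  define Df :: "real \<times> (real \<times> real) \<Rightarrow> (real \<times> (real \<times> real)) \<Rightarrow>\<^sub>L real"
    where "Df z = (a' (fst z) * b (fst (snd z)) * c (snd (snd z))) *\<^sub>R fst_blinfun
      + (a (fst z) * b' (fst (snd z)) * c (snd (snd z))) *\<^sub>R (fst_blinfun o\<^sub>L snd_blinfun)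
      + (a (fst z) * b (fst (snd z)) * c' (snd (snd z))) *\<^sub>R (snd_blinfun o\<^sub>L snd_blinfun)" for z
  have "((\<lambda>z::real \<times> (real \<times> real). a (fst z) * b (fst (snd z)) * c (snd (snd z)))
      has_derivative blinfun_apply (Df z)) (at z)" for z
  proof -
    have "((\<lambda>z::real \<times> (real \<times> real). a (fst z)) has_derivative (\<lambda>h. fst h * a' (fst z))) (at z)"
      by (rule DERIV_compose_FDERIV[OF a(1)]) (rule has_derivative_fst[OF has_derivative_ident])
    moreover have "((\<lambda>z::real \<times> (real \<times> real). b (fst (snd z)))
        has_derivative (\<lambda>h. fst (snd h) * b' (fst (snd z)))) (at z)"
      by (rule DERIV_compose_FDERIV[OF b(1)])
         (rule has_derivative_fst[OF has_derivative_snd[OF has_derivative_ident]])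
    moreover have "((\<lambda>z::real \<times> (real \<times> real). c (snd (snd z)))
        has_derivative (\<lambda>h. snd (snd h) * c' (snd (snd z)))) (at z)"
      by (rule DERIV_compose_FDERIV[OF c(1)])
         (rule has_derivative_snd[OF has_derivative_snd[OF has_derivative_ident]])
    ultimately show ?thesis
      by (rule has_derivative_eq_rhs[OF has_derivative_mult[OF has_derivative_mult]])
         (simp add: Df_def blinfun.add_left blinfun.scaleR_left fun_eq_iff algebra_simps)
  qed
  moreover have "continuous_on UNIV Df"
    unfolding Df_def[abs_def]
    by (intro continuous_intros continuous_on_compose2[OF a(2)] continuous_on_compose2[OF b(2)]
        continuous_on_compose2[OF c(2)] continuous_on_compose2[OF cont(1)]
        continuous_on_compose2[OF cont(2)] continuous_on_compose2[OF cont(3)]; simp)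
  ultimately show ?thesis unfolding C1_def by blast
qed

lemma compact_tsupportI:
  fixes \<phi> :: "'a::euclidean_space \<Rightarrow> real"
  assumes "bounded K" "\<And>z. \<phi> z \<noteq> 0 \<Longrightarrow> z \<in> K"
  shows "compact (tsupport \<phi>)"
  unfolding tsupport_def using assms by (auto intro: bounded_subset)

lemma has_real_derivative_max0_power2:
  "((\<lambda>u. (max 0 u)^2) has_real_derivative 2 * max 0 u) (at u)"
proof (cases u "0::real" rule: linorder_cases)
  case less
  have "((\<lambda>v. 0) has_real_derivative 0) (at u)" by simp
  then have "((\<lambda>u. (max 0 u)^2) has_real_derivative 0) (at u)"
    by (rule has_field_derivative_transform_within_open[where S="{..<0}"]) (use less in auto)
  then show ?thesis using less by simp
next
  case greater
  have "((\<lambda>v. v^2) has_real_derivative 2 * u) (at u)" by (auto intro!: derivative_eq_intros)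
  then have "((\<lambda>u. (max 0 u)^2) has_real_derivative 2 * u) (at u)"
    by (rule has_field_derivative_transform_within_open[where S="{0<..}"]) (use greater in auto)
  then show ?thesis using greater by simp
next
  case equal
  have "((\<lambda>v. (max 0 v)^2 / v) \<longlongrightarrow> 0) (at (0::real))"
  proof (rule Lim_null_comparison)
    show "\<forall>\<^sub>F v in at 0. norm ((max 0 v)^2 / v) \<le> \<bar>v\<bar>"
      by (intro always_eventually allI) (auto simp: power2_eq_square abs_mult max_def)
    show "((\<lambda>v. \<bar>v\<bar>) \<longlongrightarrow> 0) (at (0::real))"
      by (rule tendsto_rabs_zero[OF tendsto_ident_at])
  qed
  then show ?thesis using equal by (simp add: has_field_derivative_iff)
qed

definition smooth_step :: "real \<Rightarrow> real" where
  "smooth_step u = (max 0 u)^2 / ((max 0 u)^2 + (max 0 (1 - u))^2)"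

definition smooth_step' :: "real \<Rightarrow> real" where
  "smooth_step' u = 2 * max 0 u * max 0 (1 - u) * (max 0 u + max 0 (1 - u))
     / ((max 0 u)^2 + (max 0 (1 - u))^2)^2"

lemma smooth_step_denominator_pos: "0 < (max 0 u)^2 + (max 0 (1 - u))^2" for u :: real
proof (cases "0 < u")
  case True
  then have "max 0 u \<noteq> 0" by simp
  then have "0 < (max 0 u)^2" by simp
  then show ?thesis by (simp add: add_pos_nonneg)
next
  case False
  then have "max 0 (1 - u) \<noteq> 0" by simp
  then have "0 < (max 0 (1 - u))^2" by simp
  then show ?thesis by (simp add: add_nonneg_pos)
qed

lemma has_real_derivative_smooth_step: "(smooth_step has_real_derivative smooth_step' u) (at u)"
  unfolding smooth_step_def[abs_def]
proof (rule DERIV_cong[OF DERIV_quotient[OF has_real_derivative_max0_power2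
      DERIV_add[OF has_real_derivative_max0_power2]]])
  show "((\<lambda>u. (max 0 (1 - u))^2) has_real_derivative 2 * max 0 (1 - u) * -1) (at u)"
    by (rule DERIV_chain2[OF has_real_derivative_max0_power2]) (auto intro!: derivative_eq_intros)
  show "(max 0 u)^2 + (max 0 (1 - u))^2 \<noteq> 0"
    using smooth_step_denominator_pos[of u] by linarith
qed (simp add: smooth_step'_def power2_eq_square algebra_simps)

lemma continuous_on_smooth_step: "continuous_on UNIV smooth_step"
  and continuous_on_smooth_step': "continuous_on UNIV smooth_step'"
proof -
  have "(max 0 u)^2 + (max 0 (1 - u))^2 \<noteq> 0" for u :: real
    using smooth_step_denominator_pos[of u] by linarith
  then show "continuous_on UNIV smooth_step" "continuous_on UNIV smooth_step'"
    unfolding smooth_step_def[abs_def] smooth_step'_def[abs_def] by (auto intro!: continuous_intros)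
qed

lemma smooth_step_eq_0: "u \<le> 0 \<Longrightarrow> smooth_step u = 0"
  and smooth_step_eq_1: "1 \<le> u \<Longrightarrow> smooth_step u = 1"
  and smooth_step'_eq_0: "u \<le> 0 \<or> 1 \<le> u \<Longrightarrow> smooth_step' u = 0"
  using smooth_step_denominator_pos[of u]
  by (auto simp: smooth_step_def smooth_step'_def max_def)

lemma smooth_step_bounds: "0 \<le> smooth_step u" "smooth_step u \<le> 1"
  using smooth_step_denominator_pos[of u] by (auto simp: smooth_step_def divide_le_eq_1)

definition plateau :: "real \<Rightarrow> real \<Rightarrow> real \<Rightarrow> real" where
  "plateau a b y = smooth_step (y - a + 1) * smooth_step (b + 1 - y)"

definition plateau' :: "real \<Rightarrow> real \<Rightarrow> real \<Rightarrow> real" where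
  "plateau' a b y = smooth_step' (y - a + 1) * smooth_step (b + 1 - y)
     - smooth_step (y - a + 1) * smooth_step' (b + 1 - y)"

lemma has_real_derivative_plateau: "(plateau a b has_real_derivative plateau' a b y) (at y)"
proof -
  have "((\<lambda>y. smooth_step (y - a + 1)) has_real_derivative smooth_step' (y - a + 1) * 1) (at y)"
    by (rule DERIV_chain2[OF has_real_derivative_smooth_step]) (auto intro!: derivative_eq_intros)
  moreover have
    "((\<lambda>y. smooth_step (b + 1 - y)) has_real_derivative smooth_step' (b + 1 - y) * -1) (at y)"
    by (rule DERIV_chain2[OF has_real_derivative_smooth_step]) (auto intro!: derivative_eq_intros)
  ultimately have "(plateau a b has_real_derivative
      smooth_step (y - a + 1) * (smooth_step' (b + 1 - y) * -1)
      + smooth_step' (y - a + 1) * 1 * smooth_step (b + 1 - y)) (at y)"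
    unfolding plateau_def[abs_def] by (rule DERIV_mult')
  then show ?thesis by (simp add: plateau'_def)
qed

lemma continuous_on_plateau: "continuous_on UNIV (plateau a b)"
  and continuous_on_plateau': "continuous_on UNIV (plateau' a b)"
  unfolding plateau_def[abs_def] plateau'_def[abs_def]
  by (intro continuous_intros continuous_on_compose2[OF continuous_on_smooth_step]
      continuous_on_compose2[OF continuous_on_smooth_step']; simp)+

lemma plateau_eq_1: "a \<le> y \<Longrightarrow> y \<le> b \<Longrightarrow> plateau a b y = 1"
  and plateau'_eq_0: "a \<le> y \<Longrightarrow> y \<le> b \<Longrightarrow> plateau' a b y = 0"
  by (simp_all add: plateau_def plateau'_def smooth_step_eq_1 smooth_step'_eq_0)

lemma plateau_vanishes: "y \<le> a - 1 \<or> b + 1 \<le> y \<Longrightarrow> plateau a b y = 0"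
  and plateau'_vanishes: "y \<le> a - 1 \<or> b + 1 \<le> y \<Longrightarrow> plateau' a b y = 0"
  by (auto simp: plateau_def plateau'_def smooth_step_eq_0 smooth_step'_eq_0)

lemma plateau_bounds: "0 \<le> plateau a b y" "plateau a b y \<le> 1"
  using smooth_step_bounds[of "y - a + 1"] smooth_step_bounds[of "b + 1 - y"]
  by (auto simp: plateau_def mult_le_one)

lemma bounded_plateau': obtains K where "\<And>y. \<bar>plateau' a b y\<bar> \<le> K"
proof -
  have "compact (plateau' a b ` {a - 1..b + 1})"
    by (rule compact_continuous_image[OF continuous_on_subset[OF continuous_on_plateau']]) auto
  then obtain K where K: "\<And>z. z \<in> plateau' a b ` {a - 1..b + 1} \<Longrightarrow> \<bar>z\<bar> \<le> K"
    by (metis compact_imp_bounded bounded_iff real_norm_def)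
  have "\<bar>plateau' a b y\<bar> \<le> max 0 K" for y
    using K[of "plateau' a b y"] plateau'_vanishes[of y a b] by (cases "a - 1 < y \<and> y < b + 1") auto
  then show ?thesis by (rule that)
qed

lemma abs_mult_le_bound:
  fixes y z C :: real
  assumes "\<bar>z\<bar> \<le> C"
  shows "\<bar>y * z\<bar> \<le> C * \<bar>y\<bar>"
  using mult_left_mono[OF assms abs_ge_zero[of y]] by (simp add: abs_mult mult.commute)

definition cutoff :: "real \<Rightarrow> real \<Rightarrow> real" where
  "cutoff R y = plateau (-1) 1 (y / R)"

definition cutoff' :: "real \<Rightarrow> real \<Rightarrow> real" where
  "cutoff' R y = plateau' (-1) 1 (y / R) / R"

lemma has_real_derivative_cutoff: "(cutoff R has_real_derivative cutoff' R y) (at y)"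
proof -
  have "((\<lambda>y. y / R) has_real_derivative 1 / R) (at y)" by (rule DERIV_cdivide[OF DERIV_ident])
  from DERIV_chain2[OF has_real_derivative_plateau this] show ?thesis
    unfolding cutoff_def[abs_def] cutoff'_def by simp
qed

lemma continuous_on_cutoff: "continuous_on UNIV (cutoff R)"
  and continuous_on_cutoff': "continuous_on UNIV (cutoff' R)"
  unfolding cutoff_def[abs_def] cutoff'_def[abs_def] divide_inverse
  by (intro continuous_intros continuous_on_compose2[OF continuous_on_plateau]
      continuous_on_compose2[OF continuous_on_plateau']; simp)+

lemma cutoff_eq_1: "\<bar>y\<bar> \<le> R \<Longrightarrow> cutoff R y = 1"
  by (cases "R = 0") (auto simp: cutoff_def plateau_eq_1 abs_le_iff divide_le_eq le_divide_eq)

lemma cutoff_bounds: "0 \<le> cutoff R y" "cutoff R y \<le> 1"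
  by (simp_all add: cutoff_def plateau_bounds)

lemma cutoff_support: "0 < R \<Longrightarrow> cutoff R y \<noteq> 0 \<Longrightarrow> \<bar>y\<bar> < 2 * R"
  using plateau_vanishes[of "y / R" "-1" 1]
  by (force simp: cutoff_def abs_less_iff divide_le_eq le_divide_eq)

lemma cutoff'_support: "0 < R \<Longrightarrow> cutoff' R y \<noteq> 0 \<Longrightarrow> \<bar>y\<bar> < 2 * R"
  using plateau'_vanishes[of "y / R" "-1" 1]
  by (force simp: cutoff'_def abs_less_iff divide_le_eq le_divide_eq)

lemma eventually_cutoff_eq_1: "eventually (\<lambda>n. cutoff (real (Suc n)) y = 1) sequentially"
proof -
  obtain N :: nat where "\<bar>y\<bar> \<le> real N" using real_arch_simple by blast
  then show ?thesis
    by (intro eventually_sequentiallyI[of N] cutoff_eq_1) linarith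
qed

text \<open>Scaling the cutoff with \<open>R\<close> (rather than using \<open>plateau (-R) R\<close>) keeps the derivative of
  the truncation bounded uniformly in \<open>R\<close>.\<close>
definition truncation :: "real \<Rightarrow> real \<Rightarrow> real" where
  "truncation R x = x * cutoff R x"

definition truncation' :: "real \<Rightarrow> real \<Rightarrow> real" where
  "truncation' R x = cutoff R x + x * cutoff' R x"

lemma has_real_derivative_truncation: "(truncation R has_real_derivative truncation' R x) (at x)"
  using DERIV_mult'[OF DERIV_ident has_real_derivative_cutoff]
  unfolding truncation_def[abs_def] truncation'_def by (simp add: add.commute)

lemma continuous_on_truncation: "continuous_on UNIV (truncation R)"
  unfolding truncation_def[abs_def] by (intro continuous_intros continuous_on_cutoff)

lemma continuous_on_truncation': "continuous_on UNIV (truncation' R)"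
  unfolding truncation'_def[abs_def]
  by (intro continuous_intros continuous_on_cutoff continuous_on_cutoff')

lemma truncation'_support: "0 < R \<Longrightarrow> truncation' R x \<noteq> 0 \<Longrightarrow> \<bar>x\<bar> < 2 * R"
  using cutoff_support[of R x] cutoff'_support[of R x] by (force simp: truncation'_def)

lemma abs_truncation_le: "\<bar>truncation R x\<bar> \<le> \<bar>x\<bar>"
  using cutoff_bounds[of R x] by (simp add: truncation_def abs_mult mult_left_le)

lemma truncation'_bounded:
  obtains C where "0 \<le> C" "\<And>R x. 0 < R \<Longrightarrow> \<bar>truncation' R x\<bar> \<le> C"
proof -
  obtain K where K: "\<And>y. \<bar>plateau' (-1) 1 y\<bar> \<le> K" using bounded_plateau' by blast
  have "\<bar>truncation' R x\<bar> \<le> 1 + 2 * K" if R: "0 < R" for R x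
  proof (cases "cutoff' R x = 0")
    case True
    then show ?thesis using cutoff_bounds[of R x] K[of 0] by (simp add: truncation'_def)
  next
    case False
    then have "\<bar>x / R\<bar> < 2" using cutoff'_support[OF R] R by (simp add: abs_div pos_divide_less_eq)
    have "x * cutoff' R x = x / R * plateau' (-1) 1 (x / R)" by (simp add: cutoff'_def)
    then have "\<bar>x * cutoff' R x\<bar> = \<bar>x / R\<bar> * \<bar>plateau' (-1) 1 (x / R)\<bar>"
      by (simp only: abs_mult)
    also have "\<dots> \<le> 2 * K"
      using \<open>\<bar>x / R\<bar> < 2\<close> K[of "x / R"] by (intro mult_mono) auto
    finally have "\<bar>x * cutoff' R x\<bar> \<le> 2 * K" .
    then show ?thesis using cutoff_bounds[of R x] by (simp add: truncation'_def)
  qed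
  moreover have "0 \<le> 1 + 2 * K" using K[of 0] by linarith
  ultimately show ?thesis using that by blast
qed

lemma eventually_truncation:
  "eventually (\<lambda>n. truncation (real (Suc n)) x = x \<and> truncation' (real (Suc n)) x = 1) sequentially"
proof -
  obtain N :: nat where "\<bar>x\<bar> \<le> real N" using real_arch_simple by blast
  then have "\<bar>x\<bar> \<le> real (Suc n)" if "N \<le> n" for n using that by linarith
  moreover have "cutoff' R x = 0" if "\<bar>x\<bar> \<le> R" "0 < R" for R
    using that by (auto simp: cutoff'_def plateau'_eq_0 abs_le_iff divide_le_eq le_divide_eq)
  ultimately show ?thesis
    by (intro eventually_sequentiallyI[of N])
       (simp add: truncation_def truncation'_def cutoff_eq_1)
qed

definition truncated_fst :: "real \<Rightarrow> real \<times> real \<Rightarrow> real" where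
  "truncated_fst R p = truncation R (fst p) * cutoff R (snd p)"

definition truncated_fst' :: "real \<Rightarrow> real \<times> real \<Rightarrow> real" where
  "truncated_fst' R p = truncation' R (fst p) * cutoff R (snd p)"

lemma continuous_on_truncated_fst: "continuous_on UNIV (truncated_fst R)"
  and continuous_on_truncated_fst': "continuous_on UNIV (truncated_fst' R)"
  unfolding truncated_fst_def[abs_def] truncated_fst'_def[abs_def]
  by (intro continuous_intros continuous_on_compose2[OF continuous_on_truncation]
      continuous_on_compose2[OF continuous_on_truncation']
      continuous_on_compose2[OF continuous_on_cutoff]; simp)+

lemma abs_truncated_fst_le: "\<bar>truncated_fst R p\<bar> \<le> \<bar>fst p\<bar>"
proof -
  have "\<bar>truncated_fst R p\<bar> \<le> 1 * \<bar>truncation R (fst p)\<bar>"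
    unfolding truncated_fst_def
    by (rule abs_mult_le_bound) (use cutoff_bounds[of R "snd p"] in simp)
  also have "\<dots> \<le> \<bar>fst p\<bar>" using abs_truncation_le by simp
  finally show ?thesis .
qed

lemma truncated_fst'_bounded:
  obtains C where "0 \<le> C" "\<And>R p. 0 < R \<Longrightarrow> \<bar>truncated_fst' R p\<bar> \<le> C"
proof -
  obtain C where C: "0 \<le> C" "\<And>R x. 0 < R \<Longrightarrow> \<bar>truncation' R x\<bar> \<le> C"
    using truncation'_bounded by blast
  have "\<bar>truncated_fst' R p\<bar> \<le> C" if "0 < R" for R p
  proof -
    have "\<bar>truncated_fst' R p\<bar> \<le> 1 * \<bar>truncation' R (fst p)\<bar>"
      unfolding truncated_fst'_def
      by (rule abs_mult_le_bound) (use cutoff_bounds[of R "snd p"] in simp)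
    also have "\<dots> \<le> C" using C(2)[OF that] by simp
    finally show ?thesis .
  qed
  with C(1) show ?thesis by (rule that)
qed

lemma truncated_fst_support:
  "0 < R \<Longrightarrow> truncated_fst R p \<noteq> 0 \<Longrightarrow> \<bar>fst p\<bar> < 2 * R \<and> \<bar>snd p\<bar> < 2 * R"
  using cutoff_support[of R "fst p"] cutoff_support[of R "snd p"]
  by (auto simp: truncated_fst_def truncation_def)

lemma truncated_fst'_support:
  "0 < R \<Longrightarrow> truncated_fst' R p \<noteq> 0 \<Longrightarrow> \<bar>fst p\<bar> < 2 * R \<and> \<bar>snd p\<bar> < 2 * R"
  using truncation'_support[of R "fst p"] cutoff_support[of R "snd p"]
  by (auto simp: truncated_fst'_def)

lemma eventually_truncated_fst:
  "eventually (\<lambda>n. truncated_fst (real (Suc n)) p = fst p \<and> truncated_fst' (real (Suc n)) p = 1)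
     sequentially"
  using eventually_conj[OF eventually_truncation[of "fst p"] eventually_cutoff_eq_1[of "snd p"]]
  by eventually_elim (simp add: truncated_fst_def truncated_fst'_def)

lemma test_function_truncation:
  fixes R T :: real
  assumes R: "0 < R"
  defines "\<phi> \<equiv> \<lambda>z. plateau 0 T (fst z) * truncated_fst R (snd z)"
  shows "C1 \<phi>" and "compact (tsupport \<phi>)"
proof -
  have "C1 (\<lambda>z. plateau 0 T (fst z) * truncation R (fst (snd z)) * cutoff R (snd (snd z)))"
    by (rule C1_product_of_coordinates[OF has_real_derivative_plateau continuous_on_plateau'
          has_real_derivative_truncation continuous_on_truncation'
          has_real_derivative_cutoff continuous_on_cutoff'])
  then show "C1 \<phi>" by (simp add: \<phi>_def truncated_fst_def mult.assoc)
  show "compact (tsupport \<phi>)"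
  proof (rule compact_tsupportI)
    show "bounded ({-1..T + 1} \<times> ({-2 * R..2 * R} \<times> {-2 * R..2 * R}))"
      by (simp add: bounded_Times)
    fix z assume "\<phi> z \<noteq> 0"
    then have "plateau 0 T (fst z) \<noteq> 0" "truncated_fst R (snd z) \<noteq> 0" by (auto simp: \<phi>_def)
    then show "z \<in> {-1..T + 1} \<times> ({-2 * R..2 * R} \<times> {-2 * R..2 * R})"
      using plateau_vanishes[of "fst z" 0 T] truncated_fst_support[OF R]
      by (cases z) (force simp: abs_less_iff)
  qed
qed

section \<open>Velocity fields Lipschitz in the measure\<close>

locale velocity_field =
  fixes \<nu> :: "real measure" and F :: "(real \<times> real) measure \<Rightarrow> real \<Rightarrow> real \<Rightarrow> real"
    and Lx Lw Lm :: real
  assumes nu_P2: "\<nu> \<in> P2"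
    and Lx_nonneg: "0 \<le> Lx" and Lw_nonneg: "0 \<le> Lw"
    and F_lipschitz: "\<And>m x w x' w'. m \<in> P2nu \<nu> \<Longrightarrow>
      \<bar>F m x w - F m x' w'\<bar> \<le> Lx * \<bar>x - x'\<bar> + Lw * \<bar>w - w'\<bar>"
    and F_W1_lipschitz: "\<And>m m' x w. m \<in> P2nu \<nu> \<Longrightarrow> m' \<in> P2nu \<nu> \<Longrightarrow> w \<in> msupport \<nu> \<Longrightarrow>
      \<bar>F m x w - F m' x w\<bar> \<le> Lm * W1 m m'"
begin

lemma F_lipschitz_on: "m \<in> P2nu \<nu> \<Longrightarrow> (Lx + Lw)-lipschitz_on UNIV (\<lambda>p. F m (fst p) (snd p))"
proof (rule lipschitz_onI)
  fix p q :: "real \<times> real" assume m: "m \<in> P2nu \<nu>"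
  have "\<bar>fst p - fst q\<bar> \<le> dist p q" "\<bar>snd p - snd q\<bar> \<le> dist p q"
    using dist_fst_le[of p q] dist_snd_le[of p q] by (simp_all add: dist_real_def)
  then have "Lx * \<bar>fst p - fst q\<bar> + Lw * \<bar>snd p - snd q\<bar> \<le> (Lx + Lw) * dist p q"
    using Lx_nonneg Lw_nonneg by (simp add: distrib_right add_mono mult_left_mono)
  with F_lipschitz[OF m, of "fst p" "snd p" "fst q" "snd q"]
  show "dist (F m (fst p) (snd p)) (F m (fst q) (snd q)) \<le> (Lx + Lw) * dist p q"
    by (simp add: dist_real_def)
qed (use Lx_nonneg Lw_nonneg in simp)

lemma integrable_F: "m \<in> P2nu \<nu> \<Longrightarrow> m' \<in> P2 \<Longrightarrow> integrable m' (\<lambda>p. F m (fst p) (snd p))"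
  by (rule integrable_lipschitz_P2[OF _ F_lipschitz_on])

lemma integrable_F_mult_bounded:
  assumes "m \<in> P2nu \<nu>" "m' \<in> P2" and \<psi>: "continuous_on UNIV \<psi>" "\<And>p. \<bar>\<psi> p\<bar> \<le> C"
  shows "integrable m' (\<lambda>p. F m (fst p) (snd p) * \<psi> p)"
proof (rule Bochner_Integration.integrable_bound
    [OF integrable_mult_right[OF integrable_F[OF assms(1,2)]]])
  show "(\<lambda>p. F m (fst p) (snd p) * \<psi> p) \<in> borel_measurable m'"
    unfolding measurable_cong_sets[OF P2D(2)[OF assms(2)] refl]
    by (intro borel_measurable_continuous_onI continuous_on_mult \<psi>(1)
        lipschitz_on_continuous_on[OF F_lipschitz_on[OF assms(1)]])
  have "\<bar>F m (fst p) (snd p) * \<psi> p\<bar> \<le> \<bar>C * F m (fst p) (snd p)\<bar>" for p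
    using abs_mult_le_bound[OF \<psi>(2)[of p]] \<psi>(2)[of p] by (simp add: abs_mult)
  then show "AE p in m'. norm (F m (fst p) (snd p) * \<psi> p) \<le> norm (C * F m (fst p) (snd p))"
    by simp
qed

lemma borel_measurable_F: "m \<in> P2nu \<nu> \<Longrightarrow> (\<lambda>p. F m (fst p) (snd p)) \<in> borel_measurable borel"
  by (rule borel_measurable_continuous_onI[OF lipschitz_on_continuous_on[OF F_lipschitz_on]])

lemma abs_integral_F_diff_mean_le:
  assumes m: "m \<in> P2nu \<nu>" and bdd: "bounded (msupport \<nu>)"
  shows "\<bar>(\<integral>w. F m x w \<partial>\<nu>) - F m x (\<integral>w. w \<partial>\<nu>)\<bar>
    \<le> Lw * Sup {\<bar>w - w'\<bar> | w w'. w \<in> msupport \<nu> \<and> w' \<in> msupport \<nu>}" (is "_ \<le> Lw * ?\<gamma>")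
proof -
  interpret prob_space \<nu> using P2D(1)[OF nu_P2] .
  have lip: "Lw-lipschitz_on UNIV (\<lambda>w. F m x w)"
  proof (rule lipschitz_onI)
    show "dist (F m x w) (F m x w') \<le> Lw * dist w w'" for w w'
      using F_lipschitz[OF m, of x w x w'] by (simp add: dist_real_def)
  qed (rule Lw_nonneg)
  have "AE w in \<nu>. \<bar>F m x w - F m x (\<integral>w. w \<partial>\<nu>)\<bar> \<le> Lw * ?\<gamma>"
    using AE_msupport[OF P2D(2)[OF nu_P2]]
  proof eventually_elim
    case (elim w)
    have "\<bar>F m x w - F m x (\<integral>w. w \<partial>\<nu>)\<bar> \<le> Lw * \<bar>w - (\<integral>w. w \<partial>\<nu>)\<bar>"
      using lipschitz_onD[OF lip, of w "\<integral>w. w \<partial>\<nu>"] by (simp add: dist_real_def)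
    also have "\<dots> \<le> Lw * ?\<gamma>"
      by (intro mult_left_mono abs_mean_diff_le_diameter[OF nu_P2 bdd elim] Lw_nonneg)
    finally show ?case .
  qed
  then have "\<bar>(\<integral>w. F m x w \<partial>\<nu>) - (\<integral>w. F m x (\<integral>w. w \<partial>\<nu>) \<partial>\<nu>)\<bar> \<le> Lw * ?\<gamma>"
    by (intro abs_integral_diff_le integrable_lipschitz_P2[OF nu_P2 lip])
       (simp_all add: prob_space_axioms)
  then show ?thesis by (simp add: prob_space)
qed

lemma mean_velocity_deviation:
  fixes c :: real
  assumes m: "m \<in> P2nu \<nu>" and bdd: "bounded (msupport \<nu>)"
  defines "m\<^sub>c \<equiv> return borel c \<Otimes>\<^sub>M \<nu>"
  shows "\<bar>(\<integral>p. F m (fst p) (snd p) \<partial>m) - F m\<^sub>c c (\<integral>w. w \<partial>\<nu>)\<bar>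
    \<le> (Lm + Lx + Lw) * W1 m m\<^sub>c + Lw * Sup {\<bar>w - w'\<bar> | w w'. w \<in> msupport \<nu> \<and> w' \<in> msupport \<nu>}"
proof -
  let ?\<gamma> = "Sup {\<bar>w - w'\<bar> | w w'. w \<in> msupport \<nu> \<and> w' \<in> msupport \<nu>}"
  have mc: "m\<^sub>c \<in> P2nu \<nu>" unfolding m\<^sub>c_def by (rule dirac_pair(2)[OF nu_P2])
  have m_P2: "m \<in> P2" and mc_P2: "m\<^sub>c \<in> P2" using m mc by (auto dest: P2nu_D)
  have "AE p in m. \<bar>F m (fst p) (snd p) - F m\<^sub>c (fst p) (snd p)\<bar> \<le> Lm * W1 m m\<^sub>c"
    using AE_P2nu_msupport[OF m] by eventually_elim (rule F_W1_lipschitz[OF m mc])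
  then have "\<bar>(\<integral>p. F m (fst p) (snd p) \<partial>m) - (\<integral>p. F m\<^sub>c (fst p) (snd p) \<partial>m)\<bar> \<le> Lm * W1 m m\<^sub>c"
    by (intro abs_integral_diff_le P2D(1)[OF m_P2] integrable_F m mc m_P2)
  moreover have "\<bar>(\<integral>p. F m\<^sub>c (fst p) (snd p) \<partial>m) - (\<integral>p. F m\<^sub>c (fst p) (snd p) \<partial>m\<^sub>c)\<bar>
      \<le> (Lx + Lw) * W1 m m\<^sub>c"
    by (rule abs_integral_diff_le_W1[OF m_P2 mc_P2 F_lipschitz_on[OF mc]])
  moreover have "(\<integral>p. F m\<^sub>c (fst p) (snd p) \<partial>m\<^sub>c) = (\<integral>w. F m\<^sub>c c w \<partial>\<nu>)"
    unfolding m\<^sub>c_def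
    by (rule integral_dirac_pair[OF nu_P2 borel_measurable_F[OF mc[unfolded m\<^sub>c_def]]])
  moreover have "\<bar>(\<integral>w. F m\<^sub>c c w \<partial>\<nu>) - F m\<^sub>c c (\<integral>w. w \<partial>\<nu>)\<bar> \<le> Lw * ?\<gamma>"
    by (rule abs_integral_F_diff_mean_le[OF mc bdd])
  ultimately show ?thesis by (simp add: algebra_simps)
qed

end

section \<open>The centre of a measure-valued solution\<close>

locale measure_solution = velocity_field +
  fixes \<mu> :: "real \<Rightarrow> (real \<times> real) measure"
  assumes solution: "mvsol F \<nu> \<mu>"
begin

lemma mu_P2nu: "0 \<le> t \<Longrightarrow> \<mu> t \<in> P2nu \<nu>"
  using solution unfolding mvsol_def by blast

lemma mu_P2: "0 \<le> t \<Longrightarrow> \<mu> t \<in> P2"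
  by (rule P2nu_D(1)[OF mu_P2nu])

lemma prob_space_mu: "0 \<le> t \<Longrightarrow> prob_space (\<mu> t)"
  by (rule P2D(1)[OF mu_P2])

lemma borel_measurable_mu: "f \<in> borel_measurable borel \<Longrightarrow> 0 \<le> t \<Longrightarrow> f \<in> borel_measurable (\<mu> t)"
  by (simp add: measurable_cong_sets[OF P2D(2)[OF mu_P2] refl])

lemma weak_continuity:
  "continuous_on UNIV \<phi> \<Longrightarrow> compact (tsupport \<phi>) \<Longrightarrow> continuous_on {0..} (\<lambda>t. \<integral>p. \<phi> p \<partial>\<mu> t)"
  using solution unfolding mvsol_def by blast

lemma weak_formulation:
  "C1 \<phi> \<Longrightarrow> compact (tsupport \<phi>) \<Longrightarrow> 0 \<le> t \<Longrightarrow>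
    (\<integral>p. \<phi> (t, p) \<partial>\<mu> t) = (\<integral>p. \<phi> (0, p) \<partial>\<mu> 0) +
      integral {0..t} (\<lambda>s. \<integral>p. (deriv (\<lambda>r. \<phi> (r, p)) s
        + F (\<mu> s) (fst p) (snd p) * deriv (\<lambda>y. \<phi> (s, (y, snd p))) (fst p)) \<partial>\<mu> s)"
  using solution unfolding mvsol_def by blast

lemma W1_mu_tendsto: "0 \<le> t \<Longrightarrow> ((\<lambda>s. W1 (\<mu> s) (\<mu> t)) \<longlongrightarrow> 0) (at t within {0..})"
proof (rule tendsto_sandwich[where f="\<lambda>s. 0" and h="\<lambda>s. wasserstein 2 (\<mu> s) (\<mu> t)"])
  assume t: "0 \<le> t"
  show "eventually (\<lambda>s. 0 \<le> W1 (\<mu> s) (\<mu> t)) (at t within {0..})"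
    by (simp add: wasserstein_nonneg)
  show "eventually (\<lambda>s. W1 (\<mu> s) (\<mu> t) \<le> wasserstein 2 (\<mu> s) (\<mu> t)) (at t within {0..})"
    unfolding eventually_at_filter using t by (auto intro!: always_eventually W1_le_W2 mu_P2)
  show "((\<lambda>s. wasserstein 2 (\<mu> s) (\<mu> t)) \<longlongrightarrow> 0) (at t within {0..})"
    using solution t unfolding mvsol_def by blast
qed simp

lemma integral_mu_lipschitz_tendsto:
  fixes g :: "real \<times> real \<Rightarrow> real"
  assumes t: "0 \<le> t" and g: "L-lipschitz_on UNIV g"
  shows "((\<lambda>s. \<integral>p. g p \<partial>\<mu> s) \<longlongrightarrow> (\<integral>p. g p \<partial>\<mu> t)) (at t within {0..})"
proof -
  have "norm ((\<integral>p. g p \<partial>\<mu> s) - (\<integral>p. g p \<partial>\<mu> t)) \<le> L * W1 (\<mu> s) (\<mu> t)" if "0 \<le> s" for s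
    using abs_integral_diff_le_W1[OF mu_P2[OF that] mu_P2[OF t] g] by simp
  then have "eventually (\<lambda>s. norm ((\<integral>p. g p \<partial>\<mu> s) - (\<integral>p. g p \<partial>\<mu> t)) \<le> L * W1 (\<mu> s) (\<mu> t))
      (at t within {0..})"
    unfolding eventually_at_filter by (auto intro!: always_eventually)
  moreover have "((\<lambda>s. L * W1 (\<mu> s) (\<mu> t)) \<longlongrightarrow> 0) (at t within {0..})"
    using tendsto_mult_right_zero[OF W1_mu_tendsto[OF t]] by simp
  ultimately have "((\<lambda>s. (\<integral>p. g p \<partial>\<mu> s) - (\<integral>p. g p \<partial>\<mu> t)) \<longlongrightarrow> 0) (at t within {0..})"
    by (rule Lim_null_comparison)
  then show ?thesis by (simp add: LIM_zero_iff)
qed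

lemma integral_field_tendsto:
  fixes \<Phi> :: "real \<Rightarrow> real \<times> real \<Rightarrow> real"
  assumes t: "0 \<le> t" and C: "0 \<le> C"
    and \<Phi>: "\<And>y y' p. \<bar>\<Phi> y p - \<Phi> y' p\<bar> \<le> C * \<bar>y - y'\<bar>"
    and int: "\<And>m s. m \<in> P2nu \<nu> \<Longrightarrow> 0 \<le> s \<Longrightarrow> integrable (\<mu> s) (\<lambda>p. \<Phi> (F m (fst p) (snd p)) p)"
    and frozen: "((\<lambda>s. \<integral>p. \<Phi> (F (\<mu> t) (fst p) (snd p)) p \<partial>\<mu> s)
      \<longlongrightarrow> (\<integral>p. \<Phi> (F (\<mu> t) (fst p) (snd p)) p \<partial>\<mu> t)) (at t within {0..})"
  shows "((\<lambda>s. \<integral>p. \<Phi> (F (\<mu> s) (fst p) (snd p)) p \<partial>\<mu> s)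
      \<longlongrightarrow> (\<integral>p. \<Phi> (F (\<mu> t) (fst p) (snd p)) p \<partial>\<mu> t)) (at t within {0..})"
proof (rule tendsto_integral_perturbed[where k="\<lambda>s p. \<Phi> (F (\<mu> s) (fst p) (snd p)) p" and \<mu>=\<mu>
      and W="\<lambda>s. W1 (\<mu> s) (\<mu> t)" and c="C * Lm", OF W1_mu_tendsto[OF t] _ frozen])
  fix s :: real assume "s \<in> {0..}"
  then have s: "0 \<le> s" by simp
  have "AE p in \<mu> s. \<bar>\<Phi> (F (\<mu> s) (fst p) (snd p)) p - \<Phi> (F (\<mu> t) (fst p) (snd p)) p\<bar>
      \<le> C * Lm * W1 (\<mu> s) (\<mu> t)"
    using AE_P2nu_msupport[OF mu_P2nu[OF s]]
  proof eventually_elim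
    case (elim p)
    have "\<bar>\<Phi> (F (\<mu> s) (fst p) (snd p)) p - \<Phi> (F (\<mu> t) (fst p) (snd p)) p\<bar>
        \<le> C * \<bar>F (\<mu> s) (fst p) (snd p) - F (\<mu> t) (fst p) (snd p)\<bar>" by (rule \<Phi>)
    also have "\<dots> \<le> C * (Lm * W1 (\<mu> s) (\<mu> t))"
      by (rule mult_left_mono[OF F_W1_lipschitz[OF mu_P2nu[OF s] mu_P2nu[OF t] elim] C])
    finally show ?case by (simp add: mult.assoc)
  qed
  then show "prob_space (\<mu> s) \<and> integrable (\<mu> s) (\<lambda>p. \<Phi> (F (\<mu> s) (fst p) (snd p)) p)
      \<and> integrable (\<mu> s) (\<lambda>p. \<Phi> (F (\<mu> t) (fst p) (snd p)) p)
      \<and> (AE p in \<mu> s. \<bar>\<Phi> (F (\<mu> s) (fst p) (snd p)) p - \<Phi> (F (\<mu> t) (fst p) (snd p)) p\<bar>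
          \<le> C * Lm * W1 (\<mu> s) (\<mu> t))"
    using s t by (auto intro!: prob_space_mu int mu_P2nu)
qed

definition centre :: "real \<Rightarrow> real" where
  "centre t = (\<integral>p. fst p \<partial>\<mu> t)"

definition velocity :: "real \<Rightarrow> real" where
  "velocity t = (\<integral>p. F (\<mu> t) (fst p) (snd p) \<partial>\<mu> t)"

definition speed :: "real \<Rightarrow> real" where
  "speed t = (\<integral>p. \<bar>F (\<mu> t) (fst p) (snd p)\<bar> \<partial>\<mu> t)"

lemma continuous_on_velocity: "continuous_on {0..} velocity"
  unfolding continuous_on_def velocity_def
proof (intro ballI)
  fix t :: real assume "t \<in> {0..}"
  then have t: "0 \<le> t" by simp
  show "((\<lambda>s. \<integral>p. F (\<mu> s) (fst p) (snd p) \<partial>\<mu> s) \<longlongrightarrow> (\<integral>p. F (\<mu> t) (fst p) (snd p) \<partial>\<mu> t))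
      (at t within {0..})"
  proof (rule integral_field_tendsto[where \<Phi>="\<lambda>y p. y" and C=1, OF t])
    show "((\<lambda>s. \<integral>p. F (\<mu> t) (fst p) (snd p) \<partial>\<mu> s) \<longlongrightarrow> (\<integral>p. F (\<mu> t) (fst p) (snd p) \<partial>\<mu> t))
        (at t within {0..})"
      by (rule integral_mu_lipschitz_tendsto[OF t F_lipschitz_on[OF mu_P2nu[OF t]]])
    show "integrable (\<mu> s) (\<lambda>p. F m (fst p) (snd p))" if "m \<in> P2nu \<nu>" "0 \<le> s" for m s
      using that by (intro integrable_F mu_P2)
  qed auto
qed

lemma continuous_on_speed: "continuous_on {0..} speed"
  unfolding continuous_on_def speed_def
proof (intro ballI)
  fix t :: real assume "t \<in> {0..}"
  then have t: "0 \<le> t" by simp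
  have "1-lipschitz_on UNIV (abs :: real \<Rightarrow> real)"
    by (rule lipschitz_onI) (auto simp: dist_real_def abs_triangle_ineq3)
  from lipschitz_on_compose
    [OF F_lipschitz_on[OF mu_P2nu[OF t]] lipschitz_on_subset[OF this subset_UNIV]]
  have lip: "(1 * (Lx + Lw))-lipschitz_on UNIV (\<lambda>p. \<bar>F (\<mu> t) (fst p) (snd p)\<bar>)" by (simp add: o_def)
  show "((\<lambda>s. \<integral>p. \<bar>F (\<mu> s) (fst p) (snd p)\<bar> \<partial>\<mu> s) \<longlongrightarrow> (\<integral>p. \<bar>F (\<mu> t) (fst p) (snd p)\<bar> \<partial>\<mu> t))
      (at t within {0..})"
  proof (rule integral_field_tendsto[where \<Phi>="\<lambda>y p. \<bar>y\<bar>" and C=1, OF t])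
    show "((\<lambda>s. \<integral>p. \<bar>F (\<mu> t) (fst p) (snd p)\<bar> \<partial>\<mu> s) \<longlongrightarrow> (\<integral>p. \<bar>F (\<mu> t) (fst p) (snd p)\<bar> \<partial>\<mu> t))
        (at t within {0..})"
      by (rule integral_mu_lipschitz_tendsto[OF t lip])
    show "integrable (\<mu> s) (\<lambda>p. \<bar>F m (fst p) (snd p)\<bar>)" if "m \<in> P2nu \<nu>" "0 \<le> s" for m s
      using that by (intro integrable_abs integrable_F mu_P2)
  qed (auto simp: abs_triangle_ineq3)
qed

definition truncated_centre :: "real \<Rightarrow> real \<Rightarrow> real" where
  "truncated_centre R t = (\<integral>p. truncated_fst R p \<partial>\<mu> t)"

definition truncated_velocity :: "real \<Rightarrow> real \<Rightarrow> real" where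
  "truncated_velocity R t = (\<integral>p. F (\<mu> t) (fst p) (snd p) * truncated_fst' R p \<partial>\<mu> t)"

text \<open>The weak formulation tested against \<open>plateau 0 t (s) \<cdot> truncated_fst R (x, \<omega>)\<close>, whose time
  factor is constant on \<open>[0, t]\<close>.\<close>
lemma truncated_centre_eq:
  assumes R: "0 < R" and t: "0 \<le> t"
  shows "truncated_centre R t = truncated_centre R 0 + integral {0..t} (truncated_velocity R)"
proof -
  define \<phi> where "\<phi> z = plateau 0 t (fst z) * truncated_fst R (snd z)"
    for z :: "real \<times> (real \<times> real)"
  have dt: "deriv (\<lambda>r. \<phi> (r, p)) s = plateau' 0 t s * truncated_fst R p" for s p
    unfolding \<phi>_def fst_conv snd_conv
    by (intro DERIV_imp_deriv DERIV_cmult_right has_real_derivative_plateau)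
  have dx: "deriv (\<lambda>y. \<phi> (s, (y, w))) x = plateau 0 t s * truncated_fst' R (x, w)" for s x w
    unfolding \<phi>_def truncated_fst_def truncated_fst'_def fst_conv snd_conv
    by (intro DERIV_imp_deriv DERIV_cmult DERIV_cmult_right has_real_derivative_truncation)
  have "integral {0..t} (\<lambda>s. \<integral>p. (deriv (\<lambda>r. \<phi> (r, p)) s
      + F (\<mu> s) (fst p) (snd p) * deriv (\<lambda>y. \<phi> (s, (y, snd p))) (fst p)) \<partial>\<mu> s)
    = integral {0..t} (truncated_velocity R)"
    by (rule integral_cong) (simp add: dt dx plateau_eq_1 plateau'_eq_0 truncated_velocity_def)
  moreover have "(\<integral>p. \<phi> (\<tau>, p) \<partial>\<mu> \<tau>) = truncated_centre R \<tau>" if "\<tau> \<in> {0, t}" for \<tau>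
    using that t by (auto simp: \<phi>_def truncated_centre_def plateau_eq_1)
  ultimately show ?thesis
    using weak_formulation[OF test_function_truncation[OF R, of t, folded \<phi>_def] t] by simp
qed

lemma truncated_centre_tendsto:
  assumes t: "0 \<le> t"
  shows "(\<lambda>n. truncated_centre (Suc n) t) \<longlonglongrightarrow> centre t"
  unfolding truncated_centre_def centre_def
proof (rule integral_dominated_convergence[where w="\<lambda>p. \<bar>fst p\<bar>"])
  have "1-lipschitz_on UNIV (fst :: real \<times> real \<Rightarrow> real)"
    by (rule lipschitz_onI) (simp_all add: dist_fst_le)
  then show "integrable (\<mu> t) (\<lambda>p. \<bar>fst p\<bar>)"
    by (intro integrable_abs integrable_lipschitz_P2[OF mu_P2[OF t]])
  show "fst \<in> borel_measurable (\<mu> t)"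
    by (intro borel_measurable_mu t borel_measurable_continuous_onI continuous_intros)
  show "truncated_fst (Suc n) \<in> borel_measurable (\<mu> t)" for n
    by (intro borel_measurable_mu t borel_measurable_continuous_onI continuous_on_truncated_fst)
  show "AE p in \<mu> t. norm (truncated_fst (Suc n) p) \<le> \<bar>fst p\<bar>" for n
    using abs_truncated_fst_le by (intro AE_I2) simp
  have "eventually (\<lambda>n. truncated_fst (Suc n) p = fst p) sequentially" for p
    using eventually_truncated_fst[of p] by (rule eventually_mono) simp
  then show "AE p in \<mu> t. (\<lambda>n. truncated_fst (Suc n) p) \<longlonglongrightarrow> fst p"
    by (intro AE_I2 tendsto_eventually)
qed

lemma continuous_on_truncated_velocity:
  assumes R: "0 < R"
  shows "continuous_on {0..} (truncated_velocity R)"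
  unfolding continuous_on_def truncated_velocity_def
proof (intro ballI)
  fix t :: real assume "t \<in> {0..}"
  then have t: "0 \<le> t" by simp
  obtain C where C: "0 \<le> C" "\<And>p. \<bar>truncated_fst' R p\<bar> \<le> C"
    using truncated_fst'_bounded R by metis
  show "((\<lambda>s. \<integral>p. F (\<mu> s) (fst p) (snd p) * truncated_fst' R p \<partial>\<mu> s)
      \<longlongrightarrow> (\<integral>p. F (\<mu> t) (fst p) (snd p) * truncated_fst' R p \<partial>\<mu> t)) (at t within {0..})"
  proof (rule integral_field_tendsto[where \<Phi>="\<lambda>y p. y * truncated_fst' R p", OF t C(1)])
    show "\<bar>y * truncated_fst' R p - y' * truncated_fst' R p\<bar> \<le> C * \<bar>y - y'\<bar>" for y y' p
      using abs_mult_le_bound[OF C(2), of "y - y'"] by (simp add: left_diff_distrib)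
    show "integrable (\<mu> s) (\<lambda>p. F m (fst p) (snd p) * truncated_fst' R p)"
      if "m \<in> P2nu \<nu>" "0 \<le> s" for m s
      by (rule integrable_F_mult_bounded
          [OF that(1) mu_P2[OF that(2)] continuous_on_truncated_fst' C(2)])
    have "continuous_on UNIV (\<lambda>p. F (\<mu> t) (fst p) (snd p) * truncated_fst' R p)"
      by (intro continuous_on_mult continuous_on_truncated_fst'
          lipschitz_on_continuous_on[OF F_lipschitz_on[OF mu_P2nu[OF t]]])
    moreover have "compact (tsupport (\<lambda>p. F (\<mu> t) (fst p) (snd p) * truncated_fst' R p))"
    proof (rule compact_tsupportI[of "{-2 * R..2 * R} \<times> {-2 * R..2 * R}"])
      fix p :: "real \<times> real" assume "F (\<mu> t) (fst p) (snd p) * truncated_fst' R p \<noteq> 0"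
      then show "p \<in> {-2 * R..2 * R} \<times> {-2 * R..2 * R}"
        using truncated_fst'_support[OF R, of p] by (cases p) auto
    qed (simp add: bounded_Times)
    ultimately have
      "continuous_on {0..} (\<lambda>s. \<integral>p. F (\<mu> t) (fst p) (snd p) * truncated_fst' R p \<partial>\<mu> s)"
      by (rule weak_continuity)
    then show "((\<lambda>s. \<integral>p. F (\<mu> t) (fst p) (snd p) * truncated_fst' R p \<partial>\<mu> s)
        \<longlongrightarrow> (\<integral>p. F (\<mu> t) (fst p) (snd p) * truncated_fst' R p \<partial>\<mu> t)) (at t within {0..})"
      using t unfolding continuous_on_def by simp
  qed
qed

lemma abs_truncated_velocity_le:
  assumes s: "0 \<le> s" and C: "\<And>p. \<bar>truncated_fst' R p\<bar> \<le> C"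
  shows "\<bar>truncated_velocity R s\<bar> \<le> C * speed s"
proof -
  have "\<bar>truncated_velocity R s\<bar> \<le> (\<integral>p. C * \<bar>F (\<mu> s) (fst p) (snd p)\<bar> \<partial>\<mu> s)"
    unfolding truncated_velocity_def
  proof (rule integral_abs_bound_integral)
    show "integrable (\<mu> s) (\<lambda>p. F (\<mu> s) (fst p) (snd p) * truncated_fst' R p)"
      by (rule integrable_F_mult_bounded
          [OF mu_P2nu[OF s] mu_P2[OF s] continuous_on_truncated_fst' C])
    show "integrable (\<mu> s) (\<lambda>p. C * \<bar>F (\<mu> s) (fst p) (snd p)\<bar>)"
      by (intro integrable_mult_right integrable_abs integrable_F mu_P2nu mu_P2 s)
    show "\<bar>F (\<mu> s) (fst p) (snd p) * truncated_fst' R p\<bar> \<le> C * \<bar>F (\<mu> s) (fst p) (snd p)\<bar>" for p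
      by (rule abs_mult_le_bound[OF C])
  qed
  then show ?thesis by (simp add: speed_def)
qed

lemma truncated_velocity_tendsto:
  assumes s: "0 \<le> s"
  shows "(\<lambda>n. truncated_velocity (Suc n) s) \<longlonglongrightarrow> velocity s"
proof -
  obtain C where C: "\<And>p. \<bar>truncated_fst' (Suc n) p\<bar> \<le> C" for n :: nat
    using truncated_fst'_bounded by (metis of_nat_0_less_iff zero_less_Suc)
  have F: "continuous_on UNIV (\<lambda>p. F (\<mu> s) (fst p) (snd p))"
    by (rule lipschitz_on_continuous_on[OF F_lipschitz_on[OF mu_P2nu[OF s]]])
  show ?thesis
    unfolding truncated_velocity_def velocity_def
  proof (rule integral_dominated_convergence[where w="\<lambda>p. C * \<bar>F (\<mu> s) (fst p) (snd p)\<bar>"])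
    show "integrable (\<mu> s) (\<lambda>p. C * \<bar>F (\<mu> s) (fst p) (snd p)\<bar>)"
      by (intro integrable_mult_right integrable_abs integrable_F mu_P2nu mu_P2 s)
    show "(\<lambda>p. F (\<mu> s) (fst p) (snd p)) \<in> borel_measurable (\<mu> s)"
      by (intro borel_measurable_mu s borel_measurable_continuous_onI F)
    show "(\<lambda>p. F (\<mu> s) (fst p) (snd p) * truncated_fst' (Suc n) p) \<in> borel_measurable (\<mu> s)" for n
      by (intro borel_measurable_mu s borel_measurable_continuous_onI continuous_on_mult F
          continuous_on_truncated_fst')
    have "eventually
        (\<lambda>n. F (\<mu> s) (fst p) (snd p) * truncated_fst' (Suc n) p = F (\<mu> s) (fst p) (snd p))
        sequentially" for p
      using eventually_truncated_fst[of p] by (rule eventually_mono) simp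
    then show "AE p in \<mu> s. (\<lambda>n. F (\<mu> s) (fst p) (snd p) * truncated_fst' (Suc n) p)
        \<longlonglongrightarrow> F (\<mu> s) (fst p) (snd p)"
      by (intro AE_I2 tendsto_eventually)
    show "AE p in \<mu> s. norm (F (\<mu> s) (fst p) (snd p) * truncated_fst' (Suc n) p)
        \<le> C * \<bar>F (\<mu> s) (fst p) (snd p)\<bar>" for n
      using abs_mult_le_bound[OF C] by (intro AE_I2) simp
  qed
qed

text \<open>Let \<open>R \<rightarrow> \<infinity>\<close> in the truncated identity; the time integrals converge by dominated
  convergence, with the continuous majorant \<open>C \<cdot> speed\<close>.\<close>
lemma centre_eq_integral_velocity:
  assumes t: "0 \<le> t"
  shows "centre t = centre 0 + integral {0..t} velocity"
proof -
  obtain C where C: "\<And>p. \<bar>truncated_fst' (Suc n) p\<bar> \<le> C" for n :: nat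
    using truncated_fst'_bounded by (metis of_nat_0_less_iff zero_less_Suc)
  have "(\<lambda>n. integral {0..t} (truncated_velocity (Suc n))) \<longlonglongrightarrow> integral {0..t} velocity"
  proof (rule dominated_convergence(2)[where h="\<lambda>s. C * speed s"])
    show "truncated_velocity (Suc n) integrable_on {0..t}" for n
      by (rule integrable_continuous_interval,
          rule continuous_on_subset[OF continuous_on_truncated_velocity]) auto
    show "(\<lambda>s. C * speed s) integrable_on {0..t}"
      by (intro integrable_continuous_interval continuous_intros
          continuous_on_subset[OF continuous_on_speed]) auto
    show "norm (truncated_velocity (Suc n) s) \<le> C * speed s" if "s \<in> {0..t}" for n s
      using abs_truncated_velocity_le[OF _ C, of s n] that by simp
    show "(\<lambda>n. truncated_velocity (Suc n) s) \<longlonglongrightarrow> velocity s" if "s \<in> {0..t}" for s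
      using that truncated_velocity_tendsto[of s] by simp
  qed
  from tendsto_add[OF truncated_centre_tendsto[of 0] this]
  have "(\<lambda>n. truncated_centre (Suc n) 0 + integral {0..t} (truncated_velocity (Suc n)))
      \<longlonglongrightarrow> centre 0 + integral {0..t} velocity" by simp
  moreover have "truncated_centre (Suc n) t
      = truncated_centre (Suc n) 0 + integral {0..t} (truncated_velocity (Suc n))" for n :: nat
    by (rule truncated_centre_eq) (use t in auto)
  ultimately have "(\<lambda>n. truncated_centre (Suc n) t) \<longlonglongrightarrow> centre 0 + integral {0..t} velocity"
    by simp
  with truncated_centre_tendsto[OF t] show ?thesis by (rule LIMSEQ_unique)
qed

lemma has_real_derivative_centre:
  assumes t: "0 \<le> t"
  shows "(centre has_real_derivative velocity t) (at t within {0..})"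
proof -
  have "((\<lambda>u. centre 0 + integral {0..u} velocity) has_real_derivative velocity t)
      (at t within {0..t + 1})"
    using t by (intro DERIV_add[OF DERIV_const, simplified] integral_has_real_derivative
        continuous_on_subset[OF continuous_on_velocity]) auto
  then have "(centre has_real_derivative velocity t) (at t within {0..t + 1})"
    by (rule has_field_derivative_transform_within[where d=1])
       (use t in \<open>auto intro!: centre_eq_integral_velocity[symmetric]\<close>)
  moreover have "at t within {0..t + 1} = at t within {0..}"
    by (rule at_within_nhd[where S="{..<t + 1}"]) auto
  ultimately show ?thesis by simp
qed

end

theorem lemma2p4:
  fixes \<nu> :: "real measure"
    and F :: "(real \<times> real) measure \<Rightarrow> real \<Rightarrow> real \<Rightarrow> real"
    and \<mu> :: "real \<Rightarrow> (real \<times> real) measure"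
    and A B I M \<kappa> :: real
  defines "\<Omega> \<equiv> msupport \<nu>"
    and "\<gamma> \<equiv> Sup {\<bar>w - w'\<bar> | w w'. w \<in> msupport \<nu> \<and> w' \<in> msupport \<nu>}"
    and "\<omega>c \<equiv> \<integral>w. w \<partial>\<nu>"
    and "xc \<equiv> (\<lambda>t. \<integral>p. fst p \<partial>(\<mu> t))"
    and "\<mu>t \<equiv> (\<lambda>t. return borel (\<integral>p. fst p \<partial>(\<mu> t)) \<Otimes>\<^sub>M \<nu>)"
  assumes nu_prob: "prob_space \<nu>" and nu_sets: "sets \<nu> = sets borel"
    and nu_mom: "integrable \<nu> (\<lambda>w. w ^ 2)" and nu_bdd: "bounded \<Omega>"
    and pos: "A > 0" "B > 0" "I > 0" "M > 0" "\<kappa> > 0"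
    and A1_0: "\<And>m m' x w. m \<in> P2nu \<nu> \<Longrightarrow> m' \<in> P2nu \<nu> \<Longrightarrow> w \<in> \<Omega> \<Longrightarrow>
                 \<bar>F m x w - F m' x w\<bar> \<le> \<kappa> * M * W1 m m'"
    and A1_1: "\<And>m m' x w. m \<in> P2nu \<nu> \<Longrightarrow> m' \<in> P2nu \<nu> \<Longrightarrow> w \<in> \<Omega> \<Longrightarrow>
                 \<bar>pdx (F m) x w - pdx (F m') x w\<bar> \<le> \<kappa> * M * W1 m m'"
    and A2_C2: "\<And>m. m \<in> P2nu \<nu> \<Longrightarrow> C2 (\<lambda>p. F m (fst p) (snd p))"
    and A2_x: "\<And>m x w. m \<in> P2nu \<nu> \<Longrightarrow> \<bar>pdx (F m) x w\<bar> \<le> \<kappa> * I"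
    and A2_xx: "\<And>m x w. m \<in> P2nu \<nu> \<Longrightarrow> \<bar>pdx (pdx (F m)) x w\<bar> \<le> \<kappa> * I"
    and A2_w: "\<And>m x w. m \<in> P2nu \<nu> \<Longrightarrow> \<bar>pdw (F m) x w\<bar> \<le> I"
    and A3: "\<And>m x w. m \<in> P2nu \<nu> \<Longrightarrow>
               F (distr m borel (\<lambda>p. (fst p + 2 * pi, snd p))) (x + 2 * pi) w = F m x w"
    and A4: "\<And>x. F (return borel x \<Otimes>\<^sub>M \<nu>) x \<omega>c \<ge> A"
    and A5: "integral {0..2 * pi}
               (\<lambda>x. pdx (F (return borel x \<Otimes>\<^sub>M \<nu>)) x \<omega>c / F (return borel x \<Otimes>\<^sub>M \<nu>) x \<omega>c)
             \<le> - \<kappa> * B"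
    and sol: "mvsol F \<nu> \<mu>"
  shows "\<forall>t\<ge>0. \<exists>D. (xc has_real_derivative D) (at t within {0..}) \<and>
           \<bar>D - F (\<mu>t t) (xc t) \<omega>c\<bar> \<le> ((\<kappa> + 1) * I + \<kappa> * M) * W1 (\<mu> t) (\<mu>t t) + I * \<gamma>"
proof -
  interpret measure_solution \<nu> F "\<kappa> * I" I "\<kappa> * M" \<mu>
  proof unfold_locales
    show "\<nu> \<in> P2" using nu_prob nu_sets nu_mom by (simp add: P2_def)
    show "0 \<le> \<kappa> * I" "0 \<le> I" using pos by simp_all
    show "\<bar>F m x w - F m x' w'\<bar> \<le> \<kappa> * I * \<bar>x - x'\<bar> + I * \<bar>w - w'\<bar>" if "m \<in> P2nu \<nu>" for m x w x' w'
      by (rule C2_lipschitz[OF A2_C2 A2_x A2_w, OF that that that])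
  qed (use A1_0 sol in \<open>simp_all add: \<Omega>_def\<close>)
  have "xc = centre" by (simp add: xc_def centre_def fun_eq_iff)
  moreover have "\<bar>velocity t - F (\<mu>t t) (xc t) \<omega>c\<bar>
      \<le> ((\<kappa> + 1) * I + \<kappa> * M) * W1 (\<mu> t) (\<mu>t t) + I * \<gamma>" if "0 \<le> t" for t
    using mean_velocity_deviation[OF mu_P2nu[OF that] nu_bdd[unfolded \<Omega>_def], of "xc t"]
    unfolding velocity_def \<mu>t_def xc_def \<omega>c_def \<gamma>_def by (simp add: algebra_simps)
  ultimately show ?thesis using has_real_derivative_centre by blast
qed

end
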